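(* For all $\mu_1,\mu_2\in M_+(\mathbb T)$, $\mathcal D(\mu_1,\mu_2)\subseteq H^2(\mathbb D^2)$.
   Context: $\mathbb D$ is the open unit disc, $\mathbb T$ the unit circle, $\mathcal O(\mathbb D^2)$ the holomorphic functions on $\mathbb D^2$, $M_+(\mathbb T)$ the finite positive Borel measures on $\mathbb T$. Integrals $\int_{\mathbb T}\cdots d\theta$ are over $\theta\in[0,2\pi]$ with respect to $d\theta/2\pi$; $dA$ is normalized area measure on $\mathbb D$; for $\mu\in M_+(\mathbb T)$, $P_\mu(w)=\int_{\mathbb T}\frac{1-|w|^2}{|w-\zeta|^2}d\mu(\zeta)$. $H^2(\mathbb D^2)$ is the space of $f=\sum_{m,n\ge0}a_{m,n}z_1^mz_2^n\in\mathcal O(\mathbb D^2)$ with $\sum|a_{m,n}|^2<\infty$. For $f\in\mathcal O(\mathbb D^2)$, $D_{\mu_1,\mu_2}(f)=\sup_{0<r<1}\int_{\mathbb T}\int_{\mathbb D}|\partial_1f(z_1,re^{i\theta})|^2P_{\mu_1}(z_1)dA(z_1)d\theta+\sup_{0<r<1}\int_{\mathbb T}\int_{\mathbb D}|\partial_2f(re^{i\theta},z_2)|^2P_{\mu_2}(z_2)dA(z_2)d\theta$. If $\mu_1=0$ or $\mu_2=0$, $\mathcal D(\mu_1,\mu_2)=\{f\in H^2(\mathbb D^2):D_{\mu_1,\mu_2}(f)<\infty\}$; otherwise $\mathcal D(\mu_1,\mu_2)=\{f\in\mathcal O(\mathbb D^2):D_{\mu_1,\mu_2}(f)<\infty\}$.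 *)

theory Defs
  imports "HOL-Analysis.Analysis"
begin

abbreviation unit_disc :: "complex set" where "unit_disc \<equiv> ball 0 1"
abbreviation unit_circle :: "complex set" where "unit_circle \<equiv> sphere 0 1"

text \<open>Holomorphic functions on the bidisc: continuous and holomorphic in each
  variable separately (Osgood's definition; equivalent to joint holomorphy).\<close>
definition holo_bidisc :: "(complex \<times> complex \<Rightarrow> complex) \<Rightarrow> bool" where
  "holo_bidisc f \<longleftrightarrow>
     continuous_on (unit_disc \<times> unit_disc) f \<and>
     (\<forall>z2\<in>unit_disc. (\<lambda>z1. f (z1, z2)) holomorphic_on unit_disc) \<and>
     (\<forall>z1\<in>unit_disc. (\<lambda>z2. f (z1, z2)) holomorphic_on unit_disc)"

definition H2_bidisc :: "(complex \<times> complex \<Rightarrow> complex) set" where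
  "H2_bidisc = {f. holo_bidisc f \<and>
     (\<exists>a :: nat \<times> nat \<Rightarrow> complex.
        (\<lambda>(m,n). (norm (a (m,n)))\<^sup>2) summable_on UNIV \<and>
        (\<forall>z1\<in>unit_disc. \<forall>z2\<in>unit_disc.
           ((\<lambda>(m,n). a (m,n) * z1 ^ m * z2 ^ n) has_sum f (z1, z2)) UNIV))}"

definition circle_measure :: "complex measure \<Rightarrow> bool" where
  "circle_measure \<mu> \<longleftrightarrow> sets \<mu> = sets (restrict_space borel unit_circle) \<and> finite_measure \<mu>"

definition zero_measure :: "complex measure \<Rightarrow> bool" where
  "zero_measure \<mu> \<longleftrightarrow> emeasure \<mu> (space \<mu>) = 0"

definition poisson :: "complex measure \<Rightarrow> complex \<Rightarrow> real" where
  "poisson \<mu> w = (\<integral>\<zeta>. (1 - (cmod w)\<^sup>2) / (cmod (w - \<zeta>))\<^sup>2 \<partial>\<mu>)"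

definition pd1 :: "(complex \<times> complex \<Rightarrow> complex) \<Rightarrow> complex \<times> complex \<Rightarrow> complex" where
  "pd1 f z = deriv (\<lambda>w. f (w, snd z)) (fst z)"
definition pd2 :: "(complex \<times> complex \<Rightarrow> complex) \<Rightarrow> complex \<times> complex \<Rightarrow> complex" where
  "pd2 f z = deriv (\<lambda>w. f (fst z, w)) (snd z)"

definition area_int :: "(complex \<Rightarrow> real) \<Rightarrow> ennreal" where
  "area_int g = (\<integral>\<^sup>+ z. ennreal (indicator unit_disc z * g z / pi) \<partial>lborel)"
definition circ_int :: "(real \<Rightarrow> ennreal) \<Rightarrow> ennreal" where
  "circ_int h = (\<integral>\<^sup>+ \<theta>. ennreal (indicator {0..2*pi} \<theta> / (2*pi)) * h \<theta> \<partial>lborel)"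

definition dirichlet_integral ::
  "complex measure \<Rightarrow> complex measure \<Rightarrow> (complex \<times> complex \<Rightarrow> complex) \<Rightarrow> ennreal" where
  "dirichlet_integral \<mu>1 \<mu>2 f =
     (SUP r\<in>{0<..<1::real}. circ_int (\<lambda>\<theta>. area_int (\<lambda>z1.
        (cmod (pd1 f (z1, r * cis \<theta>)))\<^sup>2 * poisson \<mu>1 z1)))
   + (SUP r\<in>{0<..<1::real}. circ_int (\<lambda>\<theta>. area_int (\<lambda>z2.
        (cmod (pd2 f (r * cis \<theta>, z2)))\<^sup>2 * poisson \<mu>2 z2)))"

definition dirichlet_space ::
  "complex measure \<Rightarrow> complex measure \<Rightarrow> (complex \<times> complex \<Rightarrow> complex) set" where
  "dirichlet_space \<mu>1 \<mu>2 =
     (if zero_measure \<mu>1 \<or> zero_measure \<mu>2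
      then {f \<in> H2_bidisc. dirichlet_integral \<mu>1 \<mu>2 f < \<infinity>}
      else {f. holo_bidisc f \<and> dirichlet_integral \<mu>1 \<mu>2 f < \<infinity>})"

end

theory Submission
  imports Defs "HOL-Complex_Analysis.Complex_Analysis"
begin

text \<open>If one of the measures vanishes, the space lies in \<open>H\<^sup>2\<close> by definition. Otherwise the Poisson
  integral of each measure is at least \<open>c (1 - |z|)\<close> with \<open>c > 0\<close>. For \<open>g\<close> holomorphic on the disc
  with Taylor coefficients \<open>a\<^sub>k\<close>, averaging over rotations and Bessel's inequality on the circles
  \<open>|z| = \<rho>\<close> give \<open>\<integral>\<^sub>\<bbbD> |g'|\<^sup>2 (1 - |z|) dA \<ge> (1/128) \<Sum>\<^sub>k\<^sub>\<ge>\<^sub>1 |a\<^sub>k|\<^sup>2\<close>. Applied to the slices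
  \<open>z\<^sub>1 \<mapsto> f (z\<^sub>1, r e\<^sup>i\<^sup>\<theta>)\<close> and followed by Bessel's inequality in \<open>\<theta>\<close>, a finite Dirichlet integral bounds
  \<open>\<Sum> |a\<^sub>m\<^sub>n|\<^sup>2 r\<^sup>2\<^sup>n\<close> over \<open>m \<ge> 1\<close> uniformly in \<open>r < 1\<close>, and symmetrically over \<open>n \<ge> 1\<close>; hence the
  Taylor coefficients \<open>a\<^sub>m\<^sub>n\<close> of \<open>f\<close> are square summable.\<close>

lemma holo_bidisc_continuous_on: "holo_bidisc f \<Longrightarrow> continuous_on (unit_disc \<times> unit_disc) f"
  by (simp add: holo_bidisc_def)

lemma holo_bidisc_holomorphic_fst:
  "holo_bidisc f \<Longrightarrow> z2 \<in> unit_disc \<Longrightarrow> (\<lambda>z1. f (z1, z2)) holomorphic_on unit_disc"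
  by (simp add: holo_bidisc_def)

lemma holo_bidisc_holomorphic_snd:
  "holo_bidisc f \<Longrightarrow> z1 \<in> unit_disc \<Longrightarrow> (\<lambda>z2. f (z1, z2)) holomorphic_on unit_disc"
  by (simp add: holo_bidisc_def)

lemma holo_bidisc_swap: "holo_bidisc f \<Longrightarrow> holo_bidisc (\<lambda>(z1, z2). f (z2, z1))"
  unfolding holo_bidisc_def case_prod_beta
  by (auto intro!: continuous_on_compose2[of "unit_disc \<times> unit_disc" f] continuous_intros)

subsection \<open>Parametric contour integrals\<close>

lemma continuous_on_path_integrand:
  fixes g :: "real \<Rightarrow> complex"
  assumes "continuous_on (path_image g) f" and "valid_path g"
    and "continuous_on {0..1} (\<lambda>t. vector_derivative g (at t))"
  shows "continuous_on {0..1} (\<lambda>t. f (g t) * vector_derivative g (at t))"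
proof -
  have gc: "continuous_on {0..1} g"
    using \<open>valid_path g\<close> valid_path_imp_path path_def by blast
  show ?thesis
    by (intro continuous_intros continuous_on_compose2[OF assms(1) gc] assms(3))
       (auto simp: path_image_def)
qed

lemma contour_integrable_continuous_on_path:
  fixes g :: "real \<Rightarrow> complex"
  assumes "continuous_on (path_image g) f" and "valid_path g"
    and "continuous_on {0..1} (\<lambda>t. vector_derivative g (at t))"
  shows "f contour_integrable_on g"
  unfolding contour_integrable_on
  by (rule integrable_continuous_interval[OF continuous_on_path_integrand[OF assms]])

lemma continuous_on_contour_integral_param:
  assumes cont: "continuous_on (U \<times> path_image g) (\<lambda>(x, z). F x z)"
    and vp: "valid_path g"
    and vd: "continuous_on {0..1} (\<lambda>t. vector_derivative g (at t))"
  shows "continuous_on U (\<lambda>x. contour_integral g (F x))"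
proof -
  have gc: "continuous_on {0..1} g"
    using vp valid_path_imp_path path_def by blast
  have "continuous_on (U \<times> {0..1}) ((\<lambda>(x, z). F x z) \<circ> (\<lambda>(x, t). (x, g t)))"
  proof (rule continuous_on_compose)
    show "continuous_on (U \<times> {0..1}) (\<lambda>(x, t). (x, g t))"
      by (auto intro!: continuous_intros continuous_on_compose2[OF gc] simp: case_prod_beta)
    show "continuous_on ((\<lambda>(x, t). (x, g t)) ` (U \<times> {0..1})) (\<lambda>(x, z). F x z)"
      by (rule continuous_on_subset[OF cont]) (auto simp: path_image_def)
  qed
  then have "continuous_on (U \<times> cbox 0 1) (\<lambda>(x, t). F x (g t) * vector_derivative g (at t))"
    by (auto simp: case_prod_beta o_def intro!: continuous_intros continuous_on_compose2[OF vd])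
  then have "continuous_on U (\<lambda>x. integral (cbox 0 1) (\<lambda>t. F x (g t) * vector_derivative g (at t)))"
    by (rule integral_continuous_on_param)
  then show ?thesis
    by (simp add: contour_integral_integral)
qed

lemma contour_integral_linepath_param_swap:
  assumes cont: "continuous_on (closed_segment x y \<times> path_image g) (\<lambda>(z, w). F z w)"
    and vp: "valid_path g"
    and vd: "continuous_on {0..1} (\<lambda>t. vector_derivative g (at t))"
  shows "contour_integral (linepath x y) (\<lambda>z. contour_integral g (F z))
      = contour_integral g (\<lambda>w. contour_integral (linepath x y) (\<lambda>z. F z w))"
    and "(\<lambda>w. contour_integral (linepath x y) (\<lambda>z. F z w)) contour_integrable_on g"
proof -
  have vd_xy: "continuous_on {0..1} (\<lambda>t. vector_derivative (linepath x y) (at t))"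
    by (simp add: vector_derivative_linepath_at)
  show "contour_integral (linepath x y) (\<lambda>z. contour_integral g (F z))
      = contour_integral g (\<lambda>w. contour_integral (linepath x y) (\<lambda>z. F z w))"
    by (rule contour_integral_swap[OF _ valid_path_linepath vp vd_xy vd]) (simp add: cont)
  have "continuous_on (path_image g) (\<lambda>w. contour_integral (linepath x y) (\<lambda>z. F z w))"
    by (rule continuous_on_contour_integral_param[OF _ valid_path_linepath vd_xy])
       (simp add: continuous_on_swap_args[OF cont])
  then show "(\<lambda>w. contour_integral (linepath x y) (\<lambda>z. F z w)) contour_integrable_on g"
    by (rule contour_integrable_continuous_on_path[OF _ vp vd])
qed

text \<open>Morera's theorem, with Fubini for contour integrals to exchange the two integrations.\<close>

lemma holomorphic_on_contour_integral_param:
  assumes U: "open U"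
    and cont: "continuous_on (U \<times> path_image g) (\<lambda>(z, w). F z w)"
    and hol: "\<And>w. w \<in> path_image g \<Longrightarrow> (\<lambda>z. F z w) holomorphic_on U"
    and vp: "valid_path g"
    and vd: "continuous_on {0..1} (\<lambda>t. vector_derivative g (at t))"
  shows "(\<lambda>z. contour_integral g (F z)) holomorphic_on U"
proof -
  define h where "h z = contour_integral g (F z)" for z
  have "continuous_on U h"
    unfolding h_def by (rule continuous_on_contour_integral_param[OF cont vp vd])
  then have "h analytic_on U"
  proof (rule Morera_triangle[OF _ U], intro allI impI)
    fix a b c assume abc: "convex hull {a, b, c} \<subseteq> U"
    have segs: "closed_segment a b \<subseteq> U" "closed_segment b c \<subseteq> U" "closed_segment c a \<subseteq> U"
      using order_trans[OF segments_subset_convex_hull(1) abc] order_trans[OF segments_subset_convex_hull(3) abc]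
        order_trans[OF segments_subset_convex_hull(2) abc]
      by (simp_all add: closed_segment_commute[of c a])
    define E where "E x y w = contour_integral (linepath x y) (\<lambda>z. F z w)" for x y w
    have cont_xy: "continuous_on (closed_segment x y \<times> path_image g) (\<lambda>(z, w). F z w)"
      if "closed_segment x y \<subseteq> U" for x y
      by (rule continuous_on_subset[OF cont]) (use that in auto)
    note edge = contour_integral_linepath_param_swap[OF cont_xy vp vd, folded h_def E_def]
    have "E a b w + E b c w + E c a w = 0" if w: "w \<in> path_image g" for w
    proof -
      have ci: "(\<lambda>z. F z w) contour_integrable_on linepath x y" if "closed_segment x y \<subseteq> U" for x y
        using holomorphic_on_imp_continuous_on[OF hol[OF w]] that
        by (intro contour_integrable_continuous_linepath) (rule continuous_on_subset)
      have "contour_integral (linepath a b +++ linepath b c +++ linepath c a) (\<lambda>z. F z w) = 0"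
        by (rule contour_integral_unique[OF Cauchy_theorem_triangle])
           (rule holomorphic_on_subset[OF hol[OF w] abc])
      then show ?thesis
        using ci[OF segs(1)] ci[OF segs(2)] ci[OF segs(3)]
        by (simp add: E_def contour_integrable_joinI add.assoc)
    qed
    then have "contour_integral g (\<lambda>w. E a b w + E b c w + E c a w) = 0"
      by (simp add: contour_integral_eq_0)
    then show "contour_integral (linepath a b) h + contour_integral (linepath b c) h
        + contour_integral (linepath c a) h = 0"
      using edge(2)[OF segs(1)] edge(2)[OF segs(2)] edge(2)[OF segs(3)]
      by (simp add: edge(1) segs contour_integral_add contour_integrable_add)
  qed
  then show ?thesis
    unfolding h_def by (rule analytic_imp_holomorphic)
qed

subsection \<open>Taylor coefficients on the bidisc\<close>

definition slice_coeff :: "(complex \<times> complex \<Rightarrow> complex) \<Rightarrow> nat \<Rightarrow> complex \<Rightarrow> complex" where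
  "slice_coeff f m z2 = (deriv ^^ m) (\<lambda>z1. f (z1, z2)) 0 / fact m"

definition bidisc_coeff :: "(complex \<times> complex \<Rightarrow> complex) \<Rightarrow> nat \<Rightarrow> nat \<Rightarrow> complex" where
  "bidisc_coeff f m n = (deriv ^^ n) (slice_coeff f m) 0 / fact n"

lemma slice_coeff_eq_contour_integral:
  assumes f: "holo_bidisc f" and z2: "z2 \<in> unit_disc"
  shows "slice_coeff f m z2
    = contour_integral (circlepath 0 (1/2)) (\<lambda>w. f (w, z2) / w ^ Suc m) / (2 * complex_of_real pi * \<i>)"
proof -
  have h: "(\<lambda>z1. f (z1, z2)) holomorphic_on cball 0 (1/2)"
    by (rule holomorphic_on_subset[OF holo_bidisc_holomorphic_fst[OF f z2]]) auto
  have "((\<lambda>u. f (u, z2) / (u - 0) ^ Suc m) has_contour_integral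
      complex_of_real (2 * pi) * \<i> / fact m * (deriv ^^ m) (\<lambda>z1. f (z1, z2)) 0) (circlepath 0 (1/2))"
    using h by (intro Cauchy_has_contour_integral_higher_derivative_circlepath)
               (auto intro: holomorphic_on_imp_continuous_on holomorphic_on_subset)
  then show ?thesis
    by (simp add: contour_integral_unique slice_coeff_def field_simps)
qed

lemma holomorphic_slice_coeff:
  assumes f: "holo_bidisc f"
  shows "slice_coeff f m holomorphic_on unit_disc"
proof -
  define F where "F = (\<lambda>z w. f (w, z) / w ^ Suc m)"
  have "(\<lambda>z. contour_integral (circlepath 0 (1/2)) (F z)) holomorphic_on unit_disc"
  proof (rule holomorphic_on_contour_integral_param[OF open_ball])
    show "continuous_on (unit_disc \<times> path_image (circlepath 0 (1/2))) (\<lambda>(z, w). F z w)"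
      unfolding F_def case_prod_beta
      by (intro continuous_intros continuous_on_compose2[OF holo_bidisc_continuous_on[OF f]]) auto
    show "(\<lambda>z. F z w) holomorphic_on unit_disc" if "w \<in> path_image (circlepath 0 (1/2))" for w
      using that unfolding F_def by (intro holomorphic_intros holo_bidisc_holomorphic_snd[OF f]) auto
    show "continuous_on {0..1} (\<lambda>t. vector_derivative (circlepath 0 (1/2)) (at t))"
      by (simp add: vector_derivative_circlepath) (intro continuous_intros)
  qed simp
  then have "(\<lambda>z. contour_integral (circlepath 0 (1/2)) (F z) / (2 * complex_of_real pi * \<i>))
      holomorphic_on unit_disc"
    by (intro holomorphic_intros) auto
  then show ?thesis
    by (rule holomorphic_transform) (simp add: slice_coeff_eq_contour_integral[OF f] F_def)
qed

lemma holo_bidisc_bounded: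
  assumes f: "holo_bidisc f" and r: "r < 1"
  obtains M where "M > 0" "\<And>z1 z2. norm z1 \<le> r \<Longrightarrow> norm z2 \<le> r \<Longrightarrow> norm (f (z1, z2)) \<le> M"
proof -
  have "compact (f ` (cball 0 r \<times> cball 0 r))"
    by (rule compact_continuous_image, rule continuous_on_subset[OF holo_bidisc_continuous_on[OF f]])
       (use r in \<open>auto simp: compact_Times\<close>)
  then obtain M where "M > 0" "\<forall>x\<in>f ` (cball 0 r \<times> cball 0 r). norm x \<le> M"
    using compact_imp_bounded bounded_pos by metis
  then show ?thesis using that by auto
qed

lemma norm_slice_coeff_le:
  assumes f: "holo_bidisc f" and r: "0 < r" "r < 1"
    and M: "\<And>z1 z2. norm z1 \<le> r \<Longrightarrow> norm z2 \<le> r \<Longrightarrow> norm (f (z1, z2)) \<le> M"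
    and z2: "norm z2 \<le> r"
  shows "norm (slice_coeff f m z2) \<le> M / r ^ m"
proof -
  have h: "(\<lambda>z1. f (z1, z2)) holomorphic_on cball 0 r"
    by (rule holomorphic_on_subset[OF holo_bidisc_holomorphic_fst[OF f]]) (use r z2 in auto)
  have "norm ((deriv ^^ m) (\<lambda>z1. f (z1, z2)) 0) \<le> fact m * M / r ^ m"
    using h r by (intro Cauchy_inequality M z2) (auto intro: holomorphic_on_subset holomorphic_on_imp_continuous_on)
  then show ?thesis
    by (simp add: slice_coeff_def norm_divide field_simps)
qed

lemma norm_bidisc_coeff_le:
  assumes f: "holo_bidisc f" and r: "0 < r" "r < 1"
    and M: "\<And>z1 z2. norm z1 \<le> r \<Longrightarrow> norm z2 \<le> r \<Longrightarrow> norm (f (z1, z2)) \<le> M"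
  shows "norm (bidisc_coeff f m n) \<le> M / r ^ m / r ^ n"
proof -
  have h: "slice_coeff f m holomorphic_on cball 0 r"
    by (rule holomorphic_on_subset[OF holomorphic_slice_coeff[OF f]]) (use r in auto)
  have "norm ((deriv ^^ n) (slice_coeff f m) 0) \<le> fact n * (M / r ^ m) / r ^ n"
    using h r by (intro Cauchy_inequality norm_slice_coeff_le[OF f r M])
                 (auto intro: holomorphic_on_subset holomorphic_on_imp_continuous_on)
  then show ?thesis
    by (simp add: bidisc_coeff_def norm_divide field_simps)
qed

lemma summable_on_geometric_times_geometric:
  fixes p q :: real
  assumes "0 \<le> p" "p < 1" "0 \<le> q" "q < 1" "0 \<le> M"
  shows "(\<lambda>(m, n). M * p ^ m * q ^ n) summable_on UNIV"
proof -
  have row: "((\<lambda>n. M * p ^ m * q ^ n) has_sum (M * p ^ m / (1 - q))) UNIV" for m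
  proof -
    have "(\<lambda>n. M * p ^ m * q ^ n) sums (M * p ^ m * (1 / (1 - q)))"
      by (intro sums_mult geometric_sums) (use assms in auto)
    then show ?thesis
      by (intro sums_nonneg_imp_has_sum) (use assms in auto)
  qed
  have "(\<lambda>m. M / (1 - q) * p ^ m) sums (M / (1 - q) * (1 / (1 - p)))"
    by (intro sums_mult geometric_sums) (use assms in auto)
  then have "((\<lambda>m. M / (1 - q) * p ^ m) has_sum (M / (1 - q) * (1 / (1 - p)))) UNIV"
    by (intro sums_nonneg_imp_has_sum) (use assms in auto)
  then have col: "(\<lambda>m. M * p ^ m / (1 - q)) summable_on UNIV"
    by (auto simp: summable_on_def field_simps)
  have "(\<lambda>(m, n). M * p ^ m * q ^ n) summable_on Sigma UNIV (\<lambda>_. UNIV)"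
    by (rule summable_on_SigmaI[OF _ col]) (use row assms in auto)
  then show ?thesis by simp
qed

lemma holo_bidisc_coeff_geometric_bound:
  assumes f: "holo_bidisc f" and z1: "z1 \<in> unit_disc" and z2: "z2 \<in> unit_disc"
  obtains M p q :: real where "0 \<le> M" "0 \<le> p" "p < 1" "0 \<le> q" "q < 1"
    "\<And>m. norm (slice_coeff f m z2 * z1 ^ m) \<le> M * p ^ m"
    "\<And>m n. norm (bidisc_coeff f m n * z1 ^ m * z2 ^ n) \<le> M * p ^ m * q ^ n"
proof -
  define r where "r = (max (norm z1) (norm z2) + 1) / 2"
  have r: "0 < r" "r < 1" "norm z1 < r" "norm z2 < r"
    using z1 z2 by (auto simp: r_def max_def) (smt (verit) norm_ge_zero)+
  obtain M where M: "M > 0" "\<And>z1 z2. norm z1 \<le> r \<Longrightarrow> norm z2 \<le> r \<Longrightarrow> norm (f (z1, z2)) \<le> M"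
    using holo_bidisc_bounded[OF f r(2)] by blast
  define p q where "p = norm z1 / r" and "q = norm z2 / r"
  have slice_le: "norm (slice_coeff f m z2 * z1 ^ m) \<le> M * p ^ m" for m
  proof -
    have "norm (slice_coeff f m z2 * z1 ^ m) \<le> (M / r ^ m) * norm z1 ^ m"
      unfolding norm_mult norm_power
      by (intro mult_right_mono norm_slice_coeff_le[OF f r(1,2) M(2)]) (use r in auto)
    also have "\<dots> = M * p ^ m"
      using r by (simp add: p_def power_divide field_simps)
    finally show ?thesis .
  qed
  have coeff_le: "norm (bidisc_coeff f m n * z1 ^ m * z2 ^ n) \<le> M * p ^ m * q ^ n" for m n
  proof -
    have "norm (bidisc_coeff f m n * z1 ^ m * z2 ^ n) \<le> (M / r ^ m / r ^ n) * norm z1 ^ m * norm z2 ^ n"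
      unfolding norm_mult norm_power
      by (intro mult_right_mono norm_bidisc_coeff_le[OF f r(1,2) M(2)]) auto
    also have "\<dots> = M * p ^ m * q ^ n"
      using r by (simp add: p_def q_def power_divide field_simps)
    finally show ?thesis .
  qed
  have pq: "0 \<le> p" "p < 1" "0 \<le> q" "q < 1"
    using r by (auto simp: p_def q_def)
  show ?thesis
    by (rule that[OF _ pq slice_le coeff_le]) (use M(1) in simp)
qed

lemma has_sum_bidisc_coeff:
  assumes f: "holo_bidisc f" and z1: "z1 \<in> unit_disc" and z2: "z2 \<in> unit_disc"
  shows "((\<lambda>(m, n). bidisc_coeff f m n * z1 ^ m * z2 ^ n) has_sum f (z1, z2)) UNIV"
proof -
  obtain M p q :: real where M: "0 \<le> M" and pq: "0 \<le> p" "p < 1" "0 \<le> q" "q < 1"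
    and slice_le: "\<And>m. norm (slice_coeff f m z2 * z1 ^ m) \<le> M * p ^ m"
    and coeff_le: "\<And>m n. norm (bidisc_coeff f m n * z1 ^ m * z2 ^ n) \<le> M * p ^ m * q ^ n"
    using holo_bidisc_coeff_geometric_bound[OF f z1 z2] by metis
  have summable: "(\<lambda>(m, n). bidisc_coeff f m n * z1 ^ m * z2 ^ n) summable_on UNIV"
  proof -
    have "(\<lambda>x. norm ((\<lambda>(m, n). bidisc_coeff f m n * z1 ^ m * z2 ^ n) x)) summable_on UNIV"
      by (rule summable_on_comparison_test[OF summable_on_geometric_times_geometric[OF pq M]])
         (auto simp: coeff_le)
    then show ?thesis
      by (simp add: summable_on_iff_abs_summable_on_complex)
  qed
  have rows: "((\<lambda>n. bidisc_coeff f m n * z1 ^ m * z2 ^ n) has_sum (slice_coeff f m z2 * z1 ^ m)) UNIV"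
    for m
  proof (rule norm_summable_imp_has_sum)
    have "summable (\<lambda>n. M * p ^ m * q ^ n)"
      by (intro summable_mult summable_geometric) (use pq in auto)
    then show "summable (\<lambda>n. norm (bidisc_coeff f m n * z1 ^ m * z2 ^ n))"
      by (rule summable_comparison_test'[where N=0]) (use coeff_le in auto)
    have "(\<lambda>n. z1 ^ m * (bidisc_coeff f m n * z2 ^ n)) sums (z1 ^ m * slice_coeff f m z2)"
      using holomorphic_power_series[OF holomorphic_slice_coeff[OF f] z2]
      by (intro sums_mult) (simp add: bidisc_coeff_def)
    then show "(\<lambda>n. bidisc_coeff f m n * z1 ^ m * z2 ^ n) sums (slice_coeff f m z2 * z1 ^ m)"
      by (simp add: ac_simps)
  qed
  have col: "((\<lambda>m. slice_coeff f m z2 * z1 ^ m) has_sum f (z1, z2)) UNIV"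
  proof (rule norm_summable_imp_has_sum)
    have "summable (\<lambda>m. M * p ^ m)"
      by (intro summable_mult summable_geometric) (use pq in auto)
    then show "summable (\<lambda>m. norm (slice_coeff f m z2 * z1 ^ m))"
      by (rule summable_comparison_test'[where N=0]) (use slice_le in auto)
    show "(\<lambda>m. slice_coeff f m z2 * z1 ^ m) sums f (z1, z2)"
      using holomorphic_power_series[OF holo_bidisc_holomorphic_fst[OF f z2] z1]
      by (simp add: slice_coeff_def)
  qed
  have "((\<lambda>(m, n). bidisc_coeff f m n * z1 ^ m * z2 ^ n) has_sum f (z1, z2)) (Sigma UNIV (\<lambda>_. UNIV))"
    by (rule has_sum_SigmaI[OF _ col]) (use rows summable in auto)
  then show ?thesis by simp
qed

lemma powser_coeff_eq_higher_deriv: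
  fixes a :: "nat \<Rightarrow> complex"
  assumes r: "r > 0" and sums: "\<And>z. z \<in> ball 0 r \<Longrightarrow> (\<lambda>n. a n * z ^ n) sums g z"
  shows "a n = (deriv ^^ n) g 0 / fact n"
proof -
  have "g has_fps_expansion Abs_fps a"
    unfolding has_fps_expansion_def
  proof
    have "summable (\<lambda>n. a n * (of_real (r/2)) ^ n)"
      using sums[of "of_real (r/2)"] r by (auto simp: sums_iff)
    then have "conv_radius a \<ge> norm (of_real (r/2) :: complex)"
      by (rule conv_radius_geI)
    then show "0 < fps_conv_radius (Abs_fps a)"
      using r by (auto simp: fps_conv_radius_def ereal_less_le intro: order.strict_trans2[rotated])
    have "\<forall>\<^sub>F z in nhds 0. z \<in> ball (0::complex) r"
      using r by (intro eventually_nhds_in_open) auto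
    then show "\<forall>\<^sub>F z in nhds 0. eval_fps (Abs_fps a) z = g z"
      by eventually_elim (auto simp: eval_fps_def sums_unique[OF sums, symmetric])
  qed
  from fps_nth_fps_expansion[OF this, of n] show ?thesis by simp
qed

lemma double_powser_coeff_unique:
  assumes f: "holo_bidisc f"
    and b: "\<And>z1 z2. z1 \<in> unit_disc \<Longrightarrow> z2 \<in> unit_disc \<Longrightarrow>
              ((\<lambda>(m, n). b m n * z1 ^ m * z2 ^ n) has_sum f (z1, z2)) UNIV"
  shows "b m n = bidisc_coeff f m n"
proof -
  define R where "R m z2 = (\<Sum>\<^sub>\<infinity>n. b m n * z2 ^ n)" for m z2
  have b': "((\<lambda>(m, n). b m n * z1 ^ m * z2 ^ n) has_sum f (z1, z2)) (Sigma UNIV (\<lambda>_. UNIV))"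
    if "z1 \<in> unit_disc" "z2 \<in> unit_disc" for z1 z2
    using b[OF that] by simp
  have row: "((\<lambda>n. b m n * z2 ^ n) has_sum R m z2) UNIV" if z2: "z2 \<in> unit_disc" for m z2
  proof -
    have "(\<lambda>n. b m n * (1/2) ^ m * z2 ^ n) summable_on UNIV"
      using summable_on_SigmaD1[where f="\<lambda>m n. b m n * (1/2) ^ m * z2 ^ n" and A=UNIV and B="\<lambda>_. UNIV"]
        b'[of "1/2" z2] z2
      by (auto simp: summable_on_def)
    then have "(\<lambda>n. 2 ^ m * (b m n * (1/2) ^ m * z2 ^ n)) summable_on UNIV"
      by (rule summable_on_cmult_right)
    then show ?thesis
      by (simp add: R_def power_one_over field_simps)
  qed
  have R_eq: "R m z2 = slice_coeff f m z2" if z2: "z2 \<in> unit_disc" for m z2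
  proof -
    have "(\<lambda>m. R m z2 * z1 ^ m) sums f (z1, z2)" if z1: "z1 \<in> unit_disc" for z1
    proof (rule has_sum_imp_sums, rule has_sum_SigmaD[OF b'[OF z1 z2]])
      fix m :: nat
      show "((\<lambda>n. case (m, n) of (m, n) \<Rightarrow> b m n * z1 ^ m * z2 ^ n) has_sum R m z2 * z1 ^ m) UNIV"
        using has_sum_cmult_right[OF row[OF z2], of "z1 ^ m"] by (simp add: ac_simps)
    qed
    then show ?thesis
      unfolding slice_coeff_def by (intro powser_coeff_eq_higher_deriv[where r=1]) auto
  qed
  have "b m n = (deriv ^^ n) (slice_coeff f m) 0 / fact n"
    using has_sum_imp_sums[OF row] R_eq by (intro powser_coeff_eq_higher_deriv[where r=1]) auto
  then show ?thesis by (simp add: bidisc_coeff_def)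
qed

lemma bidisc_coeff_swap:
  assumes f: "holo_bidisc f"
  shows "bidisc_coeff (\<lambda>(z1, z2). f (z2, z1)) n m = bidisc_coeff f m n"
proof (rule double_powser_coeff_unique[OF f])
  fix z1 z2 :: complex assume "z1 \<in> unit_disc" "z2 \<in> unit_disc"
  then have "((\<lambda>(n, m). bidisc_coeff (\<lambda>(z1, z2). f (z2, z1)) n m * z2 ^ n * z1 ^ m)
      has_sum f (z1, z2)) (UNIV \<times> UNIV)"
    using has_sum_bidisc_coeff[OF holo_bidisc_swap[OF f]] by simp
  then show "((\<lambda>(m, n). bidisc_coeff (\<lambda>(z1, z2). f (z2, z1)) n m * z1 ^ m * z2 ^ n)
      has_sum f (z1, z2)) UNIV"
    by (subst (asm) has_sum_swap) (simp add: case_prod_beta ac_simps)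
qed

subsection \<open>Bessel's inequality on the circle\<close>

lemma integral_mult_cnj_self:
  fixes g :: "real \<Rightarrow> complex"
  assumes "continuous_on {a..b} g"
  shows "integral {a..b} (\<lambda>t. g t * cnj (g t)) = of_real (integral {a..b} (\<lambda>t. (norm (g t))\<^sup>2))"
proof -
  have "((\<lambda>t. complex_of_real ((norm (g t))\<^sup>2))
      has_integral of_real (integral {a..b} (\<lambda>t. (norm (g t))\<^sup>2))) {a..b}"
    by (intro has_integral_of_real integrable_integral integrable_continuous_interval
              continuous_intros assms)
  then show ?thesis
    unfolding complex_norm_square by (rule integral_unique)
qed

lemma integral_orthonormal_sum_mult_cnj:
  fixes e :: "nat \<Rightarrow> real \<Rightarrow> complex"
  assumes e: "\<And>k. continuous_on {a..b} (e k)"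
    and orthonormal: "\<And>j k. integral {a..b} (\<lambda>t. e j t * cnj (e k t)) = (if j = k then 1 else 0)"
  shows "integral {a..b} (\<lambda>t. (\<Sum>k<N. c k * e k t) * cnj (\<Sum>k<N. c k * e k t))
    = (\<Sum>k<N. c k * cnj (c k))"
proof -
  have int: "(\<lambda>t. c j * cnj (c k) * (e j t * cnj (e k t))) integrable_on {a..b}" for j k
    by (intro integrable_continuous_interval continuous_intros e)
  have "integral {a..b} (\<lambda>t. (\<Sum>k<N. c k * e k t) * cnj (\<Sum>k<N. c k * e k t))
      = integral {a..b} (\<lambda>t. \<Sum>j<N. \<Sum>k<N. c j * cnj (c k) * (e j t * cnj (e k t)))"
    by (simp add: sum_product ac_simps)
  also have "\<dots> = (\<Sum>j<N. \<Sum>k<N. c j * cnj (c k) * integral {a..b} (\<lambda>t. e j t * cnj (e k t)))"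
    using int by (simp add: integral_sum integrable_sum)
  also have "\<dots> = (\<Sum>k<N. c k * cnj (c k))"
    by (simp add: orthonormal if_distrib sum.delta cong: if_cong)
  finally show ?thesis .
qed

text \<open>Expand \<open>0 \<le> \<integral>|g - P|\<^sup>2\<close> for the orthogonal projection \<open>P\<close> of \<open>g\<close> onto the first \<open>N\<close> vectors.\<close>

lemma bessel_inequality_integral:
  fixes g :: "real \<Rightarrow> complex" and e :: "nat \<Rightarrow> real \<Rightarrow> complex"
  assumes g: "continuous_on {a..b} g" and e: "\<And>k. continuous_on {a..b} (e k)"
    and orthonormal: "\<And>j k. integral {a..b} (\<lambda>t. e j t * cnj (e k t)) = (if j = k then 1 else 0)"
  shows "(\<Sum>k<N. (norm (integral {a..b} (\<lambda>t. g t * cnj (e k t))))\<^sup>2)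
    \<le> integral {a..b} (\<lambda>t. (norm (g t))\<^sup>2)"
proof -
  define c where "c k = integral {a..b} (\<lambda>t. g t * cnj (e k t))" for k
  define P where "P t = (\<Sum>k<N. c k * e k t)" for t
  define S where "S = (\<Sum>k<N. (norm (c k))\<^sup>2)"
  have P: "continuous_on {a..b} P"
    unfolding P_def by (intro continuous_intros e)
  have S: "of_real S = (\<Sum>k<N. c k * cnj (c k))"
    by (simp only: S_def of_real_sum complex_norm_square)
  have gP: "integral {a..b} (\<lambda>t. g t * cnj (P t)) = of_real S"
  proof -
    have "integral {a..b} (\<lambda>t. g t * cnj (P t))
        = integral {a..b} (\<lambda>t. \<Sum>k<N. cnj (c k) * (g t * cnj (e k t)))"
      by (simp add: P_def sum_distrib_left ac_simps)
    also have "\<dots> = (\<Sum>k<N. cnj (c k) * c k)"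
      by (subst integral_sum) (auto simp: c_def intro!: integrable_continuous_interval continuous_intros g e)
    finally show ?thesis
      by (simp add: S mult.commute)
  qed
  have Pg: "integral {a..b} (\<lambda>t. P t * cnj (g t)) = of_real S"
    using arg_cong[OF gP, of cnj] by (simp add: integral_cnj mult.commute)
  have PP: "integral {a..b} (\<lambda>t. P t * cnj (P t)) = of_real S"
    unfolding P_def S by (rule integral_orthonormal_sum_mult_cnj[OF e orthonormal])
  have "of_real (integral {a..b} (\<lambda>t. (norm (g t - P t))\<^sup>2))
      = integral {a..b} (\<lambda>t. g t * cnj (g t) - g t * cnj (P t) - P t * cnj (g t) + P t * cnj (P t))"
    by (subst integral_mult_cnj_self[symmetric]) (auto intro!: continuous_intros g P simp: algebra_simps)
  also have "\<dots> = of_real (integral {a..b} (\<lambda>t. (norm (g t))\<^sup>2) - S)"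
    by (subst integral_add integral_diff,
        (auto intro!: integrable_continuous_interval continuous_intros g P)[2])+
       (simp add: integral_mult_cnj_self[OF g] gP Pg PP)
  finally have "integral {a..b} (\<lambda>t. (norm (g t - P t))\<^sup>2) = integral {a..b} (\<lambda>t. (norm (g t))\<^sup>2) - S"
    using of_real_eq_iff by blast
  moreover have "0 \<le> integral {a..b} (\<lambda>t. (norm (g t - P t))\<^sup>2)"
    by (intro integral_nonneg integrable_continuous_interval continuous_intros g P) auto
  ultimately show ?thesis
    by (simp add: S_def c_def)
qed

definition unit_circle_param :: "real \<Rightarrow> complex" where
  "unit_circle_param t = exp (2 * of_real pi * \<i> * of_real t)"

lemma unit_circle_param_eq_cis: "unit_circle_param t = cis (2 * pi * t)"
  by (simp add: unit_circle_param_def cis_conv_exp mult.commute mult.left_commute)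

lemma cnj_unit_circle_param: "cnj (unit_circle_param t) = inverse (unit_circle_param t)"
  by (simp add: unit_circle_param_def exp_cnj exp_minus[symmetric])

lemma continuous_on_unit_circle_param [continuous_intros]: "continuous_on A unit_circle_param"
  unfolding unit_circle_param_def by (intro continuous_intros)

lemma unit_circle_param_nonzero [simp]: "unit_circle_param t \<noteq> 0"
  by (simp add: unit_circle_param_def)

lemma norm_unit_circle_param [simp]: "norm (unit_circle_param t) = 1"
  by (simp add: unit_circle_param_def norm_exp_eq_Re)

lemma integral_unit_circle_param_orthonormal:
  "integral {0..1} (\<lambda>t. unit_circle_param t ^ j * cnj (unit_circle_param t ^ k)) = (if j = k then 1 else 0)"
proof -
  define a where "a = 2 * of_real pi * \<i> * (of_int (int j - int k) :: complex)"
  have eq: "unit_circle_param t ^ j * cnj (unit_circle_param t) ^ k = exp (a * of_real t)" for t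
    unfolding unit_circle_param_def a_def exp_cnj exp_of_nat_mult[symmetric] exp_add[symmetric]
    by (simp add: algebra_simps)
  show ?thesis
  proof (cases "j = k")
    case True
    then show ?thesis
      by (simp add: cnj_unit_circle_param power_inverse field_simps)
  next
    case False
    then have "a \<noteq> 0" by (simp add: a_def)
    have "exp a = 1"
      using exp_2pi_1_int[of "int j - int k"] by (simp add: a_def algebra_simps)
    then show ?thesis
      using Kronecker_Approximation_Theorem.integral_exp[of 1 a] \<open>a \<noteq> 0\<close> False by (simp add: eq)
  qed
qed

lemma taylor_coeff_eq_integral_unit_circle:
  assumes h: "h holomorphic_on ball 0 R" and R: "R > 1"
  shows "integral {0..1} (\<lambda>t. h (unit_circle_param t) * cnj (unit_circle_param t ^ k))
    = (deriv ^^ k) h 0 / fact k"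
proof -
  have "((\<lambda>u. h u / (u - 0) ^ Suc k) has_contour_integral
      complex_of_real (2 * pi) * \<i> / fact k * (deriv ^^ k) h 0) (circlepath 0 1)"
  proof (rule Cauchy_has_contour_integral_higher_derivative_circlepath)
    have "h holomorphic_on cball 0 1"
      by (rule holomorphic_on_subset[OF h]) (use R in auto)
    then show "continuous_on (cball 0 1) h" "h holomorphic_on ball 0 1"
      by (auto intro: holomorphic_on_imp_continuous_on holomorphic_on_subset)
  qed auto
  then have "((\<lambda>t. h (circlepath 0 1 t) / (circlepath 0 1 t - 0) ^ Suc k
      * vector_derivative (circlepath 0 1) (at t within {0..1}))
      has_integral complex_of_real (2 * pi) * \<i> / fact k * (deriv ^^ k) h 0) {0..1}"
    unfolding has_contour_integral_def .
  then have "((\<lambda>t. h (unit_circle_param t) / unit_circle_param t ^ Suc k * (2 * pi * \<i> * unit_circle_param t))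
      has_integral complex_of_real (2 * pi) * \<i> / fact k * (deriv ^^ k) h 0) {0..1}"
  proof (rule has_integral_eq[rotated])
    fix t :: real assume "t \<in> {0..1}"
    then have "vector_derivative (circlepath 0 1) (at t within {0..1}) = 2 * pi * \<i> * unit_circle_param t"
      using vector_derivative_circlepath01[of t 0 1] by (simp add: unit_circle_param_def)
    moreover have "circlepath 0 1 t = unit_circle_param t"
      by (simp add: circlepath unit_circle_param_def)
    ultimately show "h (circlepath 0 1 t) / (circlepath 0 1 t - 0) ^ Suc k
        * vector_derivative (circlepath 0 1) (at t within {0..1})
      = h (unit_circle_param t) / unit_circle_param t ^ Suc k * (2 * pi * \<i> * unit_circle_param t)"
      by simp
  qed
  then have "((\<lambda>t. (2 * pi * \<i>) * (h (unit_circle_param t) * cnj (unit_circle_param t ^ k)))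
      has_integral complex_of_real (2 * pi) * \<i> / fact k * (deriv ^^ k) h 0) {0..1}"
    by (rule has_integral_eq[rotated]) (simp add: cnj_unit_circle_param field_simps power_inverse)
  then have "((\<lambda>t. h (unit_circle_param t) * cnj (unit_circle_param t ^ k))
      has_integral (deriv ^^ k) h 0 / fact k) {0..1}"
    using has_integral_mult_right[of _ _ "{0..1}" "1 / (2 * pi * \<i>)"] by fastforce
  then show ?thesis
    by (rule integral_unique)
qed

lemma bessel_inequality_unit_circle:
  assumes h: "h holomorphic_on ball 0 R" and R: "R > 1"
  shows "(\<Sum>k<N. (norm ((deriv ^^ k) h 0 / fact k))\<^sup>2)
    \<le> integral {0..1} (\<lambda>t. (norm (h (unit_circle_param t)))\<^sup>2)"
proof -
  have "continuous_on {0..1} (\<lambda>t. h (unit_circle_param t))"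
    using R by (intro continuous_on_compose2[OF holomorphic_on_imp_continuous_on[OF h]] continuous_intros)
               auto
  moreover have "continuous_on {0..1} (\<lambda>t. unit_circle_param t ^ k)" for k
    by (intro continuous_intros)
  ultimately show ?thesis
    using bessel_inequality_integral[of 0 1 "\<lambda>t. h (unit_circle_param t)" "\<lambda>k t. unit_circle_param t ^ k" N]
      integral_unit_circle_param_orthonormal
    by (simp only: taylor_coeff_eq_integral_unit_circle[OF h R])
qed

subsection \<open>Averaging over rotations\<close>

lemma circ_int_eq_integral:
  fixes G :: "real \<Rightarrow> real"
  assumes G: "continuous_on UNIV G" and G_nonneg: "\<And>x. G x \<ge> 0"
  shows "circ_int (\<lambda>\<theta>. ennreal (G \<theta>)) = ennreal (integral {0..1} (\<lambda>t. G (2 * pi * t)))"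
proof -
  define f where "f \<theta> = ennreal (indicator {0..2*pi} \<theta> / (2*pi)) * ennreal (G \<theta>)" for \<theta>
  have f: "f \<in> borel_measurable borel"
    unfolding f_def using borel_measurable_continuous_onI[OF G] by measurable
  have "circ_int (\<lambda>\<theta>. ennreal (G \<theta>)) = ennreal \<bar>2*pi\<bar> * (\<integral>\<^sup>+ x. f (0 + (2*pi) * x) \<partial>lborel)"
    unfolding circ_int_def f_def[symmetric] by (rule nn_integral_real_affine[OF f]) simp
  also have "\<dots> = (\<integral>\<^sup>+ x. ennreal (indicator {0..1} x * G (2 * pi * x)) \<partial>lborel)"
  proof (subst nn_integral_cmult[symmetric], use f in measurable, rule nn_integral_cong)
    fix x :: real
    have "indicator {0..2*pi} (2 * pi * x) = (indicator {0..1} x :: real)"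
      by (auto simp: indicator_def zero_le_mult_iff) (use pi_gt_zero in linarith)+
    then show "ennreal \<bar>2*pi\<bar> * f (0 + 2 * pi * x) = ennreal (indicator {0..1} x * G (2 * pi * x))"
      by (simp add: f_def ennreal_mult'[symmetric] ennreal_mult''[symmetric] G_nonneg)
  qed
  also have "\<dots> = ennreal (integral {0..1} (\<lambda>t. G (2 * pi * t)))"
  proof (rule nn_integral_has_integral_lebesgue)
    have "continuous_on {0..1} (\<lambda>t. G (2 * pi * t))"
      by (rule continuous_on_compose2[OF G]) (auto intro!: continuous_intros)
    then show "((\<lambda>t. G (2 * pi * t)) has_integral integral {0..1} (\<lambda>t. G (2 * pi * t))) {0..1}"
      by (intro integrable_integral integrable_continuous_interval)
  qed (rule G_nonneg)
  finally show ?thesis .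
qed

lemma circ_int_const: "circ_int (\<lambda>\<theta>. c) = c"
proof -
  have "circ_int (\<lambda>\<theta>. 1) = 1"
    using circ_int_eq_integral[of "\<lambda>_. 1"] by simp
  then show ?thesis
    unfolding circ_int_def by (subst nn_integral_multc) auto
qed

lemma circ_int_mono: "(\<And>\<theta>. F \<theta> \<le> G \<theta>) \<Longrightarrow> circ_int F \<le> circ_int G"
  unfolding circ_int_def by (intro nn_integral_mono mult_left_mono) auto

lemma area_int_mono: "(\<And>z. z \<in> unit_disc \<Longrightarrow> F z \<le> G z) \<Longrightarrow> area_int F \<le> area_int G"
  unfolding area_int_def
  by (intro nn_integral_mono ennreal_leI) (auto simp: indicator_def divide_right_mono)

lemma borel_measurable_continuous_compose:
  assumes "F \<in> borel_measurable borel" and "continuous_on UNIV g"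
  shows "(\<lambda>x. F (g x)) \<in> borel_measurable borel"
  using measurable_compose[OF borel_measurable_continuous_onI[OF assms(2)] assms(1)] by (simp add: o_def)

lemma continuous_on_Complex_pair [continuous_intros]:
  assumes "continuous_on A f" and "continuous_on A g"
  shows "continuous_on A (\<lambda>x. Complex (f x) (g x))"
proof -
  have "(\<lambda>x. Complex (f x) (g x)) = (\<lambda>x. of_real (f x) + \<i> * of_real (g x))"
    by (auto simp: complex_eq_iff)
  then show ?thesis
    using assms by (auto intro!: continuous_intros)
qed

lemma borel_measurable_pair_compose:
  fixes F :: "'a::euclidean_space \<times> 'b::euclidean_space \<Rightarrow> 'c::topological_space"
  assumes "F \<in> borel_measurable borel"
  shows "F \<in> borel_measurable (lborel \<Otimes>\<^sub>M lborel)"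
  using assms by (simp add: lborel_prod measurable_lborel1)

lemma borel_measurable_Complex_pair:
  "(\<lambda>(x, y). Complex x y) \<in> borel_measurable (lborel \<Otimes>\<^sub>M lborel)"
  unfolding case_prod_beta
  by (intro borel_measurable_pair_compose borel_measurable_continuous_onI continuous_intros)

lemma lborel_complex_eq_distr_pair: "lborel = distr (lborel \<Otimes>\<^sub>M lborel) borel (\<lambda>(x, y). Complex x y)"
proof (rule lborel_eqI)
  fix l u :: complex
  assume lu: "\<And>b. b \<in> Basis \<Longrightarrow> l \<bullet> b \<le> u \<bullet> b"
  then have "Re l \<le> Re u" "Im l \<le> Im u"
    using lu[of 1] lu[of \<i>] by (auto simp: Basis_complex_def)
  moreover have "(\<lambda>(x, y). Complex x y) -` box l u \<inter> space (lborel \<Otimes>\<^sub>M lborel)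
      = {Re l<..<Re u} \<times> {Im l<..<Im u}"
    by (auto simp: mem_box Basis_complex_def space_pair_measure)
  ultimately show "emeasure (distr (lborel \<Otimes>\<^sub>M lborel) borel (\<lambda>(x, y). Complex x y)) (box l u)
      = ennreal (prod ((\<bullet>) (u - l)) Basis)"
    by (subst emeasure_distr[OF borel_measurable_Complex_pair])
       (auto simp: lborel.emeasure_pair_measure_Times Basis_complex_def ennreal_mult)
qed simp

lemma nn_integral_lborel_complex:
  assumes F: "F \<in> borel_measurable borel"
  shows "(\<integral>\<^sup>+ z. F z \<partial>lborel) = (\<integral>\<^sup>+ x. \<integral>\<^sup>+ y. F (Complex x y) \<partial>lborel \<partial>lborel)"
proof -
  have FC: "(\<lambda>p. F (Complex (fst p) (snd p))) \<in> borel_measurable (lborel \<Otimes>\<^sub>M lborel)"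
    by (intro borel_measurable_pair_compose borel_measurable_continuous_compose[OF F] continuous_intros)
  show ?thesis
    using lborel.nn_integral_fst[OF FC]
    by (subst lborel_complex_eq_distr_pair)
       (simp add: nn_integral_distr[OF borel_measurable_Complex_pair] F case_prod_beta)
qed

definition shear_Re :: "real \<Rightarrow> complex \<Rightarrow> complex" where
  "shear_Re a z = Complex (Re z + a * Im z) (Im z)"

definition shear_Im :: "real \<Rightarrow> complex \<Rightarrow> complex" where
  "shear_Im b z = Complex (Re z) (Im z + b * Re z)"

lemma continuous_on_shear_Re [continuous_intros]:
  "continuous_on A f \<Longrightarrow> continuous_on A (\<lambda>x. shear_Re a (f x))"
  unfolding shear_Re_def by (intro continuous_intros)

lemma continuous_on_shear_Im [continuous_intros]:
  "continuous_on A f \<Longrightarrow> continuous_on A (\<lambda>x. shear_Im b (f x))"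
  unfolding shear_Im_def by (intro continuous_intros)

lemma nn_integral_lborel_translate:
  fixes F :: "real \<Rightarrow> ennreal"
  assumes "F \<in> borel_measurable borel"
  shows "(\<integral>\<^sup>+ x. F (x + c) \<partial>lborel) = (\<integral>\<^sup>+ x. F x \<partial>lborel)"
  using nn_integral_real_affine[OF assms, of 1 c] by (simp add: add.commute)

lemma nn_integral_shear_Im:
  assumes F: "F \<in> borel_measurable borel"
  shows "(\<integral>\<^sup>+ z. F (shear_Im b z) \<partial>lborel) = (\<integral>\<^sup>+ z. F z \<partial>lborel)"
proof -
  have "(\<integral>\<^sup>+ z. F (shear_Im b z) \<partial>lborel) = (\<integral>\<^sup>+ x. \<integral>\<^sup>+ y. F (Complex x (y + b * x)) \<partial>lborel \<partial>lborel)"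
    by (subst nn_integral_lborel_complex)
       (auto simp: shear_Im_def intro!: borel_measurable_continuous_compose[OF F] continuous_intros)
  also have "\<dots> = (\<integral>\<^sup>+ x. \<integral>\<^sup>+ y. F (Complex x y) \<partial>lborel \<partial>lborel)"
    by (intro nn_integral_cong nn_integral_lborel_translate borel_measurable_continuous_compose[OF F]
              continuous_intros)
  also have "\<dots> = (\<integral>\<^sup>+ z. F z \<partial>lborel)"
    by (rule nn_integral_lborel_complex[OF F, symmetric])
  finally show ?thesis .
qed

lemma nn_integral_shear_Re:
  assumes F: "F \<in> borel_measurable borel"
  shows "(\<integral>\<^sup>+ z. F (shear_Re a z) \<partial>lborel) = (\<integral>\<^sup>+ z. F z \<partial>lborel)"
proof -
  have swap: "(\<integral>\<^sup>+ x. \<integral>\<^sup>+ y. G (Complex x y) \<partial>lborel \<partial>lborel)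
      = (\<integral>\<^sup>+ y. \<integral>\<^sup>+ x. G (Complex x y) \<partial>lborel \<partial>lborel)"
    if G: "G \<in> borel_measurable borel" for G :: "complex \<Rightarrow> ennreal"
    by (rule lborel_pair.Fubini'[symmetric])
       (auto simp: case_prod_beta' intro!: borel_measurable_pair_compose
             borel_measurable_continuous_compose[OF G] continuous_intros)
  have F_shear: "(\<lambda>z. F (shear_Re a z)) \<in> borel_measurable borel"
    by (intro borel_measurable_continuous_compose[OF F] continuous_intros)
  have "(\<integral>\<^sup>+ z. F (shear_Re a z) \<partial>lborel)
      = (\<integral>\<^sup>+ y. \<integral>\<^sup>+ x. F (shear_Re a (Complex x y)) \<partial>lborel \<partial>lborel)"
    by (simp only: nn_integral_lborel_complex[OF F_shear] swap[OF F_shear])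
  also have "\<dots> = (\<integral>\<^sup>+ y. \<integral>\<^sup>+ x. F (Complex (x + a * y) y) \<partial>lborel \<partial>lborel)"
    by (simp add: shear_Re_def)
  also have "\<dots> = (\<integral>\<^sup>+ y. \<integral>\<^sup>+ x. F (Complex x y) \<partial>lborel \<partial>lborel)"
    by (intro nn_integral_cong nn_integral_lborel_translate[where F="\<lambda>x. F (Complex x _)"]
              borel_measurable_continuous_compose[OF F] continuous_intros)
  also have "\<dots> = (\<integral>\<^sup>+ z. F z \<partial>lborel)"
    by (simp add: nn_integral_lborel_complex[OF F] swap[OF F])
  finally show ?thesis .
qed

text \<open>Paeth's decomposition of a rotation into three shears, valid when \<open>tan (\<theta>/2)\<close> is defined.\<close>

lemma cis_mult_eq_shears:
  assumes "cos (\<theta>/2) \<noteq> 0"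
  shows "cis \<theta> * z = shear_Re (- tan (\<theta>/2)) (shear_Im (sin \<theta>) (shear_Re (- tan (\<theta>/2)) z))"
proof -
  define t S where "t = tan (\<theta>/2)" and "S = sin \<theta>"
  define s c where "s = sin (\<theta>/2)" and "c = cos (\<theta>/2)"
  have c: "c \<noteq> 0" using assms by (simp add: c_def)
  have sc: "s\<^sup>2 = 1 - c\<^sup>2" by (simp add: s_def c_def sin_squared_eq)
  have S: "S = 2 * s * c" and cos: "cos \<theta> = 1 - 2 * s\<^sup>2"
    using sin_double[of "\<theta>/2"] cos_double_sin[of "\<theta>/2"] by (simp_all add: S_def s_def c_def)
  have t: "t = s / c" by (simp add: t_def s_def c_def tan_def)
  have cos_eq: "cos \<theta> = 1 - t * S"
    using c unfolding cos S t by (simp add: field_simps power2_eq_square)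
  have "2 * t - S * t\<^sup>2 = 2 * s * (1 - s\<^sup>2) / c"
    using c unfolding S t by (simp add: field_simps power2_eq_square)
  also have "\<dots> = S"
    using c unfolding sc S by (simp add: field_simps power2_eq_square)
  finally have sin_eq: "sin \<theta> = 2 * t - S * t\<^sup>2"
    by (simp add: S_def)
  show ?thesis
    unfolding t_def[symmetric] S_def[symmetric]
  proof (rule complex_eqI)
    show "Re (cis \<theta> * z) = Re (shear_Re (- t) (shear_Im S (shear_Re (- t) z)))"
      by (simp add: shear_Re_def shear_Im_def cos_eq sin_eq algebra_simps power2_eq_square)
    show "Im (cis \<theta> * z) = Im (shear_Re (- t) (shear_Im S (shear_Re (- t) z)))"
      by (simp add: shear_Re_def shear_Im_def cos_eq S_def algebra_simps)
  qed
qed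

lemma nn_integral_cis_mult:
  assumes F: "F \<in> borel_measurable borel"
  shows "(\<integral>\<^sup>+ z. F (cis \<theta> * z) \<partial>lborel) = (\<integral>\<^sup>+ z. F z \<partial>lborel)"
proof -
  have shears: "(\<integral>\<^sup>+ z. G (cis \<phi> * z) \<partial>lborel) = (\<integral>\<^sup>+ z. G z \<partial>lborel)"
    if G: "G \<in> borel_measurable borel" and "cos (\<phi>/2) \<noteq> 0" for G :: "complex \<Rightarrow> ennreal" and \<phi>
  proof -
    define a b where "a = - tan (\<phi>/2)" and "b = sin \<phi>"
    have "(\<integral>\<^sup>+ z. G (cis \<phi> * z) \<partial>lborel) = (\<integral>\<^sup>+ z. G (shear_Re a (shear_Im b (shear_Re a z))) \<partial>lborel)"
      using that by (simp add: cis_mult_eq_shears a_def b_def)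
    also have "\<dots> = (\<integral>\<^sup>+ z. G (shear_Re a (shear_Im b z)) \<partial>lborel)"
      by (rule nn_integral_shear_Re[of "\<lambda>w. G (shear_Re a (shear_Im b w))"])
         (intro borel_measurable_continuous_compose[OF G] continuous_intros)
    also have "\<dots> = (\<integral>\<^sup>+ z. G (shear_Re a z) \<partial>lborel)"
      by (rule nn_integral_shear_Im[of "\<lambda>w. G (shear_Re a w)"])
         (intro borel_measurable_continuous_compose[OF G] continuous_intros)
    also have "\<dots> = (\<integral>\<^sup>+ z. G z \<partial>lborel)"
      by (rule nn_integral_shear_Re[OF G])
    finally show ?thesis .
  qed
  show ?thesis
  proof (cases "cos (\<theta>/2) = 0")
    case True
    then have "cis \<theta> = cis (pi/2) * cis (pi/2)"
      using cos_double_cos[of "\<theta>/2"] sin_double[of "\<theta>/2"] by (simp add: complex_eq_iff)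
    have cos: "cos (pi / 2 / 2) \<noteq> 0"
      by (simp add: cos_45)
    have "(\<integral>\<^sup>+ z. F (cis \<theta> * z) \<partial>lborel) = (\<integral>\<^sup>+ z. F (cis (pi/2) * (cis (pi/2) * z)) \<partial>lborel)"
      by (simp only: \<open>cis \<theta> = cis (pi/2) * cis (pi/2)\<close> mult.assoc)
    also have "\<dots> = (\<integral>\<^sup>+ z. F (cis (pi/2) * z) \<partial>lborel)"
      by (rule shears[OF _ cos]) (intro borel_measurable_continuous_compose[OF F] continuous_intros)
    also have "\<dots> = (\<integral>\<^sup>+ z. F z \<partial>lborel)"
      by (rule shears[OF F cos])
    finally show ?thesis .
  qed (simp add: shears F)
qed

text \<open>Integrating over \<open>\<theta>\<close> the rotation invariance of Lebesgue measure, then using Tonelli.\<close>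

lemma nn_integral_rotation_average:
  assumes G: "G \<in> borel_measurable borel"
  shows "(\<integral>\<^sup>+ z. G z \<partial>lborel) = (\<integral>\<^sup>+ z. circ_int (\<lambda>\<theta>. G (cis \<theta> * z)) \<partial>lborel)"
proof -
  define w where "w \<theta> = ennreal (indicator {0..2*pi} \<theta> / (2*pi))" for \<theta> :: real
  have w: "w \<in> borel_measurable borel"
    unfolding w_def by measurable
  have G_rot: "(\<lambda>p :: real \<times> complex. G (cis (fst p) * snd p)) \<in> borel_measurable borel"
    by (intro borel_measurable_continuous_compose[OF G] continuous_intros)
  have "(\<integral>\<^sup>+ z. G z \<partial>lborel) = circ_int (\<lambda>\<theta>. \<integral>\<^sup>+ z. G (cis \<theta> * z) \<partial>lborel)"
    by (simp add: nn_integral_cis_mult[OF G] circ_int_const)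
  also have "\<dots> = (\<integral>\<^sup>+ \<theta>. \<integral>\<^sup>+ z. w \<theta> * G (cis \<theta> * z) \<partial>lborel \<partial>lborel)"
    unfolding circ_int_def w_def[symmetric]
    by (intro nn_integral_cong nn_integral_cmult[symmetric])
       (auto simp: measurable_lborel1 intro!: borel_measurable_continuous_compose[OF G] continuous_intros)
  also have "\<dots> = (\<integral>\<^sup>+ z. \<integral>\<^sup>+ \<theta>. w \<theta> * G (cis \<theta> * z) \<partial>lborel \<partial>lborel)"
  proof (rule lborel_pair.Fubini'[symmetric])
    have "(\<lambda>p :: real \<times> complex. w (fst p) * G (cis (fst p) * snd p)) \<in> borel_measurable borel"
      by (intro borel_measurable_times_ennreal G_rot borel_measurable_continuous_compose[OF w]
                continuous_intros)
    then show "(\<lambda>(\<theta>, z). w \<theta> * G (cis \<theta> * z)) \<in> borel_measurable (lborel \<Otimes>\<^sub>M lborel)"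
      using borel_measurable_pair_compose by (simp add: case_prod_beta')
  qed
  also have "\<dots> = (\<integral>\<^sup>+ z. circ_int (\<lambda>\<theta>. G (cis \<theta> * z)) \<partial>lborel)"
    by (simp add: circ_int_def w_def)
  finally show ?thesis .
qed

subsection \<open>A weighted Dirichlet integral dominates the Taylor coefficients\<close>

lemma bessel_inequality_disc:
  assumes g: "g holomorphic_on unit_disc" and z: "z \<in> unit_disc"
  shows "(\<Sum>k<N. (norm ((deriv ^^ k) g 0 / fact k))\<^sup>2 * norm z ^ (2*k))
    \<le> integral {0..1} (\<lambda>t. (norm (g (z * unit_circle_param t)))\<^sup>2)"
proof -
  define R where "R = 2 / (1 + norm z)"
  have "0 < 1 + norm z"
    by (smt (verit) norm_ge_zero)
  then have R: "R > 1" "norm z * R < 1"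
    using z by (simp_all add: R_def field_simps)
  have maps: "z * w \<in> unit_disc" if "w \<in> ball 0 R" for w
  proof -
    have "norm z * norm w \<le> norm z * R"
      using that by (intro mult_left_mono) auto
    then show ?thesis
      using R by (simp add: norm_mult)
  qed
  have h: "(\<lambda>w. g (z * w)) holomorphic_on ball 0 R"
    by (rule holomorphic_on_compose_gen[OF _ g, unfolded o_def]) (auto intro!: holomorphic_intros maps)
  have "(deriv ^^ k) (\<lambda>w. g (z * w)) 0 = z ^ k * (deriv ^^ k) g 0" for k
    using higher_deriv_compose_linear[where S="ball 0 R" and z=0 and u=z and n=k, OF g] maps R by simp
  then have "(norm ((deriv ^^ k) (\<lambda>w. g (z * w)) 0 / fact k))\<^sup>2
      = (norm ((deriv ^^ k) g 0 / fact k))\<^sup>2 * norm z ^ (2*k)" for k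
    by (simp add: norm_mult norm_divide norm_power power_divide power_mult_distrib power_mult ac_simps)
  then show ?thesis
    using bessel_inequality_unit_circle[OF h R(1), of N] by simp
qed

lemma circ_int_bessel_inequality_disc:
  assumes g: "g holomorphic_on unit_disc" and z: "z \<in> unit_disc"
  shows "ennreal (\<Sum>k<N. (norm ((deriv ^^ k) g 0 / fact k))\<^sup>2 * norm z ^ (2*k))
    \<le> circ_int (\<lambda>\<theta>. ennreal ((norm (g (cis \<theta> * z)))\<^sup>2))"
proof -
  have "continuous_on UNIV (\<lambda>\<theta>. (norm (g (cis \<theta> * z)))\<^sup>2)"
    using z by (intro continuous_intros continuous_on_compose2[OF holomorphic_on_imp_continuous_on[OF g]])
               (auto simp: norm_mult)
  then show ?thesis
    using bessel_inequality_disc[OF g z, of N]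
    by (simp add: circ_int_eq_integral unit_circle_param_eq_cis mult.commute ennreal_leI)
qed

lemma circ_int_cmult:
  assumes "F \<in> borel_measurable borel"
  shows "circ_int (\<lambda>\<theta>. c * F \<theta>) = c * circ_int F"
  unfolding circ_int_def using assms
  by (subst nn_integral_cmult[symmetric]) (auto simp: measurable_lborel1 ac_simps)

lemma borel_measurable_area_integrand:
  assumes "continuous_on unit_disc W"
  shows "(\<lambda>z. ennreal (indicator unit_disc z * W z / pi)) \<in> borel_measurable borel"
proof -
  have "(\<lambda>z. indicator unit_disc z *\<^sub>R (W z / pi)) \<in> borel_measurable borel"
    by (rule borel_measurable_continuous_on_indicator) (auto intro!: continuous_intros assms)
  then show ?thesis
    by (simp add: measurable_compose[OF _ measurable_ennreal])
qed

text \<open>The weight \<open>1 - |z|\<close> is at least \<open>1/(8K)\<close> and \<open>|z|\<^sup>2\<^sup>k \<ge> 1/2\<close> on the annulus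
  \<open>1 - 1/(4K) \<le> |z| < 1 - 1/(8K)\<close>, \<open>K = k + 1\<close>, whose normalized area exceeds \<open>1/(8K)\<close>.\<close>

lemma area_int_weight_power_ge:
  "ennreal (1 / (128 * (real k + 1)\<^sup>2)) \<le> area_int (\<lambda>z. (1 - norm z) * norm z ^ (2*k))"
proof -
  define K where "K = real k + 1"
  have K1: "K \<ge> 1" by (simp add: K_def)
  define s t where "s = 1 - 1 / (4 * K)" and "t = 1 - 1 / (8 * K)"
  have s0: "3/4 \<le> s" and st: "s < t" and t1: "t < 1"
    using K1 by (auto simp: s_def t_def field_simps)
  define A where "A = ball (0::complex) t - ball 0 s"
  define m where "m = 1 / (8 * K) * (1/2) / pi"
  have m0: "m \<ge> 0" using K1 by (simp add: m_def)
  have s_pow: "s ^ (2*k) \<ge> 1/2"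
  proof -
    have "1 + real (2*k) * (- 1 / (4 * K)) \<le> (1 + (- 1 / (4 * K))) ^ (2*k)"
      by (rule Bernoulli_inequality) (use K1 in \<open>simp add: field_simps\<close>)
    moreover have "1 + real (2*k) * (- 1 / (4 * K)) \<ge> 1/2"
      using K1 by (simp add: K_def field_simps)
    ultimately show ?thesis by (simp add: s_def)
  qed
  have on_A: "ennreal (m * indicator A z)
      \<le> ennreal (indicator unit_disc z * ((1 - norm z) * norm z ^ (2*k)) / pi)" for z
  proof (cases "z \<in> A")
    case True
    then have zs: "s \<le> norm z" and zt: "norm z < t" by (auto simp: A_def)
    have "1 / (8 * K) \<le> 1 - norm z"
      using zt by (simp add: t_def)
    moreover have "1/2 \<le> norm z ^ (2*k)"
      using s_pow power_mono[OF zs, of "2*k"] s0 by linarith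
    ultimately have "1 / (8 * K) * (1/2) \<le> (1 - norm z) * norm z ^ (2*k)"
      using zt t1 by (intro mult_mono) auto
    then have "m \<le> ((1 - norm z) * norm z ^ (2*k)) / pi"
      unfolding m_def by (rule divide_right_mono) auto
    then show ?thesis
      using True zt t1 by (simp add: ennreal_leI)
  qed auto
  have "emeasure lborel A = ennreal (pi * t\<^sup>2) - ennreal (pi * s\<^sup>2)"
    unfolding A_def using st s0
    by (subst emeasure_Diff) (auto simp: emeasure_ball unit_ball_vol_2 mult.commute)
  also have "\<dots> = ennreal (pi * (t\<^sup>2 - s\<^sup>2))"
    using s0 st by (subst ennreal_minus) (auto simp: algebra_simps)
  finally have measure_A: "emeasure lborel A = ennreal (pi * (t\<^sup>2 - s\<^sup>2))" .
  have "t\<^sup>2 - s\<^sup>2 \<ge> 1 / (8 * K)"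
  proof -
    have "(1 / (8 * K)) * 1 \<le> (t - s) * (t + s)"
      by (rule mult_mono) (use K1 s0 st t1 in \<open>auto simp: s_def t_def field_simps\<close>)
    then show ?thesis by (simp add: algebra_simps power2_eq_square)
  qed
  then have "1 / (8 * K) / (16 * K) \<le> (t\<^sup>2 - s\<^sup>2) / (16 * K)"
    using K1 by (intro divide_right_mono) auto
  moreover have "m * (pi * (t\<^sup>2 - s\<^sup>2)) = (t\<^sup>2 - s\<^sup>2) / (16 * K)"
    using K1 by (simp add: m_def)
  ultimately have "1 / (128 * K\<^sup>2) \<le> m * (pi * (t\<^sup>2 - s\<^sup>2))"
    by (simp add: power2_eq_square)
  moreover have "(\<integral>\<^sup>+ z. ennreal (m * indicator A z) \<partial>lborel) = ennreal (m * (pi * (t\<^sup>2 - s\<^sup>2)))"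
  proof -
    have "A \<in> sets lborel" by (simp add: A_def)
    from nn_integral_cmult_indicator[OF this, of "ennreal m"] show ?thesis
      using m0 st s0 by (simp add: ennreal_mult'' ennreal_indicator measure_A ennreal_mult)
  qed
  ultimately have "ennreal (1 / (128 * K\<^sup>2)) \<le> (\<integral>\<^sup>+ z. ennreal (m * indicator A z) \<partial>lborel)"
    by (simp add: ennreal_leI)
  also have "\<dots> \<le> area_int (\<lambda>z. (1 - norm z) * norm z ^ (2*k))"
    unfolding area_int_def by (rule nn_integral_mono) (rule on_A)
  finally show ?thesis by (simp add: K_def)
qed

lemma area_int_radial_series_ge:
  assumes a: "\<And>k. a k \<ge> 0"
  shows "ennreal (\<Sum>k<N. a k / (128 * (real k + 1)\<^sup>2))
    \<le> area_int (\<lambda>z. (1 - norm z) * (\<Sum>k<N. a k * norm z ^ (2*k)))"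
proof -
  define w where "w k z = ennreal (indicator unit_disc z * ((1 - norm z) * norm z ^ (2*k)) / pi)" for k z
  have w: "w k \<in> borel_measurable borel" for k
    unfolding w_def by (intro borel_measurable_area_integrand continuous_intros)
  have "ennreal (\<Sum>k<N. a k / (128 * (real k + 1)\<^sup>2))
      = (\<Sum>k<N. ennreal (a k) * ennreal (1 / (128 * (real k + 1)\<^sup>2)))"
    using a by (simp add: ennreal_mult'[symmetric])
  also have "\<dots> \<le> (\<Sum>k<N. ennreal (a k) * area_int (\<lambda>z. (1 - norm z) * norm z ^ (2*k)))"
    by (intro sum_mono mult_left_mono area_int_weight_power_ge) auto
  also have "\<dots> = (\<Sum>k<N. \<integral>\<^sup>+ z. ennreal (a k) * w k z \<partial>lborel)"
    unfolding area_int_def w_def[symmetric]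
    by (intro sum.cong refl nn_integral_cmult[symmetric]) (simp add: w measurable_lborel1)
  also have "\<dots> = (\<integral>\<^sup>+ z. (\<Sum>k<N. ennreal (a k) * w k z) \<partial>lborel)"
    by (rule nn_integral_sum[symmetric]) (auto simp: measurable_lborel1 intro!: borel_measurable_times_ennreal w)
  also have "\<dots> = area_int (\<lambda>z. (1 - norm z) * (\<Sum>k<N. a k * norm z ^ (2*k)))"
    unfolding area_int_def
  proof (rule nn_integral_cong)
    fix z :: complex
    show "(\<Sum>k<N. ennreal (a k) * w k z)
        = ennreal (indicator unit_disc z * ((1 - norm z) * (\<Sum>k<N. a k * norm z ^ (2*k))) / pi)"
    proof (cases "z \<in> unit_disc")
      case True
      then have "ennreal (a k) * w k z = ennreal (a k * ((1 - norm z) * norm z ^ (2*k)) / pi)" for k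
        using a by (simp add: w_def ennreal_mult'[symmetric])
      moreover have "0 \<le> a k * ((1 - norm z) * norm z ^ (2*k)) / pi" for k
        using a True by simp
      ultimately show ?thesis
        using True by (simp add: sum_distrib_left sum_divide_distrib ac_simps)
    qed (simp add: w_def)
  qed
  finally show ?thesis .
qed

text \<open>Averaging over rotations reduces the area integral to integrals over circles \<open>|z| = \<rho>\<close>, on which
  Bessel's inequality for \<open>g'\<close> applies; the factor \<open>(k + 1)\<^sup>2\<close> relating the Taylor coefficients of \<open>g'\<close>
  and \<open>g\<close> is absorbed by the radial weight.\<close>

lemma area_int_weighted_deriv_ge:
  assumes g: "g holomorphic_on unit_disc" and c: "c \<ge> 0"
  shows "ennreal (c / 128 * (\<Sum>k<N. (norm ((deriv ^^ Suc k) g 0 / fact (Suc k)))\<^sup>2))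
    \<le> area_int (\<lambda>z. (norm (deriv g z))\<^sup>2 * (c * (1 - norm z)))"
proof -
  define b where "b k = (norm ((deriv ^^ k) (deriv g) 0 / fact k))\<^sup>2" for k
  define W where "W = (\<lambda>z. (norm (deriv g z))\<^sup>2 * (c * (1 - norm z)))"
  have g': "deriv g holomorphic_on unit_disc"
    by (rule holomorphic_deriv[OF g open_ball])
  have b: "(norm ((deriv ^^ Suc k) g 0 / fact (Suc k)))\<^sup>2 = b k / (real k + 1)\<^sup>2" for k
    unfolding b_def funpow_Suc_right o_def norm_divide
    by (simp add: power_divide fact_Suc norm_mult power_mult_distrib field_simps del: of_nat_Suc)
  have "ennreal (c / 128 * (\<Sum>k<N. (norm ((deriv ^^ Suc k) g 0 / fact (Suc k)))\<^sup>2))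
      = ennreal (\<Sum>k<N. c * b k / (128 * (real k + 1)\<^sup>2))"
    unfolding b sum_distrib_left by (intro arg_cong[where f=ennreal] sum.cong refl) (simp add: field_simps)
  also have "\<dots> \<le> area_int (\<lambda>z. (1 - norm z) * (\<Sum>k<N. c * b k * norm z ^ (2*k)))"
    using c by (intro area_int_radial_series_ge) (simp add: b_def)
  also have "\<dots> \<le> (\<integral>\<^sup>+ z. circ_int (\<lambda>\<theta>. ennreal (indicator unit_disc (cis \<theta> * z) * W (cis \<theta> * z) / pi))
      \<partial>lborel)"
    unfolding area_int_def
  proof (rule nn_integral_mono)
    fix z :: complex
    show "ennreal (indicator unit_disc z * ((1 - norm z) * (\<Sum>k<N. c * b k * norm z ^ (2*k))) / pi)
        \<le> circ_int (\<lambda>\<theta>. ennreal (indicator unit_disc (cis \<theta> * z) * W (cis \<theta> * z) / pi))"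
    proof (cases "z \<in> unit_disc")
      case z: True
      define d where "d = c * (1 - norm z) / pi"
      have d: "d \<ge> 0" using c z by (simp add: d_def)
      have "continuous_on UNIV (\<lambda>\<theta>. (norm (deriv g (cis \<theta> * z)))\<^sup>2)"
        using z by (intro continuous_intros continuous_on_compose2[OF holomorphic_on_imp_continuous_on[OF g']])
                   (auto simp: norm_mult)
      then have meas: "(\<lambda>\<theta>. ennreal ((norm (deriv g (cis \<theta> * z)))\<^sup>2)) \<in> borel_measurable borel"
        by (intro measurable_compose[OF _ measurable_ennreal] borel_measurable_continuous_onI)
      have "ennreal (indicator unit_disc z * ((1 - norm z) * (\<Sum>k<N. c * b k * norm z ^ (2*k))) / pi)
          = ennreal d * ennreal (\<Sum>k<N. b k * norm z ^ (2*k))"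
        using z d by (simp add: d_def sum_distrib_left sum_divide_distrib ennreal_mult[symmetric] b_def sum_nonneg ac_simps)
      also have "\<dots> \<le> ennreal d * circ_int (\<lambda>\<theta>. ennreal ((norm (deriv g (cis \<theta> * z)))\<^sup>2))"
        using circ_int_bessel_inequality_disc[OF g' z, of N] by (intro mult_left_mono) (auto simp: b_def)
      also have "\<dots> = circ_int (\<lambda>\<theta>. ennreal d * ennreal ((norm (deriv g (cis \<theta> * z)))\<^sup>2))"
        by (rule circ_int_cmult[OF meas, symmetric])
      also have "\<dots> = circ_int (\<lambda>\<theta>. ennreal (indicator unit_disc (cis \<theta> * z) * W (cis \<theta> * z) / pi))"
        using z d by (intro arg_cong[where f=circ_int] ext)
                     (simp add: W_def d_def norm_mult ennreal_mult[symmetric] ac_simps)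
      finally show ?thesis .
    qed simp
  qed
  also have "\<dots> = area_int W"
    unfolding area_int_def
    unfolding W_def
    by (rule nn_integral_rotation_average[symmetric])
       (intro borel_measurable_area_integrand continuous_intros holomorphic_on_imp_continuous_on g')
  finally show ?thesis
    by (simp add: W_def)
qed

subsection \<open>The Poisson integral of a nonzero measure\<close>

lemma circle_measure_mass_pos:
  assumes "circle_measure \<mu>" and "\<not> zero_measure \<mu>"
  shows "measure \<mu> (space \<mu>) > 0"
proof -
  interpret finite_measure \<mu>
    using assms(1) by (simp add: circle_measure_def)
  show ?thesis
    using assms(2) by (simp add: zero_measure_def emeasure_eq_measure zero_less_measure_iff)
qed

lemma poisson_kernel_bounds:
  assumes z: "z \<in> unit_disc" and \<zeta>: "norm \<zeta> = 1"
  shows "(1 - norm z) / 2 \<le> (1 - (norm z)\<^sup>2) / (norm (z - \<zeta>))\<^sup>2"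
    and "(1 - (norm z)\<^sup>2) / (norm (z - \<zeta>))\<^sup>2 \<le> (1 - (norm z)\<^sup>2) / (1 - norm z)\<^sup>2"
proof -
  have upper: "norm (z - \<zeta>) \<le> 1 + norm z"
    using norm_triangle_ineq4[of z \<zeta>] \<zeta> by simp
  have lower: "1 - norm z \<le> norm (z - \<zeta>)"
    using norm_triangle_ineq2[of \<zeta> z] \<zeta> by (simp add: norm_minus_commute)
  have z1: "0 < 1 - norm z" using z by simp
  have num: "1 - (norm z)\<^sup>2 = (1 - norm z) * (1 + norm z)"
    by (simp add: algebra_simps power2_eq_square)
  have num_nonneg: "0 \<le> 1 - (norm z)\<^sup>2"
    using z1 by (simp add: num)
  have "(1 - norm z) / 2 \<le> (1 - norm z) / (1 + norm z)"
    using z1 z by (intro divide_left_mono) (auto intro: add_pos_nonneg)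
  also have "\<dots> = (1 - (norm z)\<^sup>2) / (1 + norm z)\<^sup>2"
    unfolding num by (simp add: power2_eq_square add_pos_nonneg)
  also have "\<dots> \<le> (1 - (norm z)\<^sup>2) / (norm (z - \<zeta>))\<^sup>2"
    using z1 lower upper by (intro divide_left_mono num_nonneg power_mono mult_pos_pos) auto
  finally show "(1 - norm z) / 2 \<le> (1 - (norm z)\<^sup>2) / (norm (z - \<zeta>))\<^sup>2" .
  show "(1 - (norm z)\<^sup>2) / (norm (z - \<zeta>))\<^sup>2 \<le> (1 - (norm z)\<^sup>2) / (1 - norm z)\<^sup>2"
    using z1 lower by (intro divide_left_mono num_nonneg power_mono mult_pos_pos) auto
qed

lemma poisson_ge:
  assumes \<mu>: "circle_measure \<mu>" and z: "z \<in> unit_disc"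
  shows "measure \<mu> (space \<mu>) / 2 * (1 - norm z) \<le> poisson \<mu> z"
proof -
  have sets: "sets \<mu> = sets (restrict_space borel unit_circle)"
    using \<mu> by (simp add: circle_measure_def)
  interpret finite_measure \<mu>
    using \<mu> by (simp add: circle_measure_def)
  have space: "space \<mu> = unit_circle"
    using sets_eq_imp_space_eq[OF sets] by (simp add: space_restrict_space)
  define k where "k \<zeta> = (1 - (norm z)\<^sup>2) / (norm (z - \<zeta>))\<^sup>2" for \<zeta>
  have k: "(1 - norm z) / 2 \<le> k \<zeta>" "k \<zeta> \<le> (1 - (norm z)\<^sup>2) / (1 - norm z)\<^sup>2" if "\<zeta> \<in> space \<mu>" for \<zeta>
    using poisson_kernel_bounds[OF z, of \<zeta>] that space by (simp_all add: k_def)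
  have "k \<in> borel_measurable (restrict_space borel unit_circle)"
    unfolding k_def by (intro measurable_restrict_space1) measurable
  then have "integrable \<mu> k"
    using k z by (intro integrable_const_bound[where B="(1 - (norm z)\<^sup>2) / (1 - norm z)\<^sup>2"] AE_I2)
                 (force simp: measurable_cong_sets[OF sets refl] intro: order.trans[rotated])+
  then have "(\<integral>\<zeta>. (1 - norm z) / 2 \<partial>\<mu>) \<le> (\<integral>\<zeta>. k \<zeta> \<partial>\<mu>)"
    by (rule integral_mono[rotated]) (use k in auto)
  then show ?thesis
    by (simp add: poisson_def k_def mult.commute)
qed

subsection \<open>Square summability of the Taylor coefficients\<close>

definition dirichlet_integral_fst :: "complex measure \<Rightarrow> (complex \<times> complex \<Rightarrow> complex) \<Rightarrow> ennreal" where
  "dirichlet_integral_fst \<mu> f = (SUP r\<in>{0<..<1::real}. circ_int (\<lambda>\<theta>. area_int (\<lambda>z1.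
     (cmod (pd1 f (z1, r * cis \<theta>)))\<^sup>2 * poisson \<mu> z1)))"

lemma dirichlet_integral_eq_fst_swap:
  "dirichlet_integral \<mu>1 \<mu>2 f = dirichlet_integral_fst \<mu>1 f + dirichlet_integral_fst \<mu>2 (\<lambda>(z1, z2). f (z2, z1))"
  by (simp add: dirichlet_integral_def dirichlet_integral_fst_def pd1_def pd2_def)

lemma area_int_slice_deriv_ge:
  assumes f: "holo_bidisc f" and c: "c \<ge> 0" and P: "\<And>z. z \<in> unit_disc \<Longrightarrow> c * (1 - norm z) \<le> P z"
    and z2: "z2 \<in> unit_disc"
  shows "ennreal (c / 128 * (\<Sum>m<N. (norm (slice_coeff f (Suc m) z2))\<^sup>2))
    \<le> area_int (\<lambda>z1. (norm (pd1 f (z1, z2)))\<^sup>2 * P z1)"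
proof -
  have "ennreal (c / 128 * (\<Sum>m<N. (norm (slice_coeff f (Suc m) z2))\<^sup>2))
      \<le> area_int (\<lambda>z. (norm (deriv (\<lambda>w. f (w, z2)) z))\<^sup>2 * (c * (1 - norm z)))"
    unfolding slice_coeff_def by (rule area_int_weighted_deriv_ge[OF holo_bidisc_holomorphic_fst[OF f z2] c])
  also have "\<dots> \<le> area_int (\<lambda>z1. (norm (pd1 f (z1, z2)))\<^sup>2 * P z1)"
    by (rule area_int_mono) (auto simp: pd1_def intro!: mult_left_mono P)
  finally show ?thesis .
qed

text \<open>Bessel's inequality in the second variable, on the circle of radius \<open>r\<close>.\<close>

lemma sum_sq_bidisc_coeff_le_circ_int:
  assumes f: "holo_bidisc f" and c: "c \<ge> 0" and P: "\<And>z. z \<in> unit_disc \<Longrightarrow> c * (1 - norm z) \<le> P z"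
    and r: "0 < r" "r < 1"
  shows "ennreal (c / 128 * (\<Sum>m<N. \<Sum>n<N. (norm (bidisc_coeff f (Suc m) n))\<^sup>2 * r ^ (2*n)))
    \<le> circ_int (\<lambda>\<theta>. area_int (\<lambda>z1. (norm (pd1 f (z1, r * cis \<theta>)))\<^sup>2 * P z1))"
proof -
  define G where "G \<theta> = c / 128 * (\<Sum>m<N. (norm (slice_coeff f (Suc m) (r * cis \<theta>)))\<^sup>2)" for \<theta>
  have r_disc: "complex_of_real r \<in> unit_disc" using r by simp
  have slice: "continuous_on unit_disc (slice_coeff f m)" for m
    by (rule holomorphic_on_imp_continuous_on[OF holomorphic_slice_coeff[OF f]])
  have G: "continuous_on UNIV G"
    unfolding G_def by (intro continuous_intros continuous_on_compose2[OF slice]) (use r in \<open>auto simp: norm_mult\<close>)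
  have "(\<Sum>m<N. \<Sum>n<N. (norm (bidisc_coeff f (Suc m) n))\<^sup>2 * r ^ (2*n))
      \<le> (\<Sum>m<N. integral {0..1} (\<lambda>t. (norm (slice_coeff f (Suc m) (r * unit_circle_param t)))\<^sup>2))"
    using bessel_inequality_disc[OF holomorphic_slice_coeff[OF f] r_disc] r
    by (intro sum_mono) (simp add: bidisc_coeff_def)
  also have "\<dots> = integral {0..1} (\<lambda>t. \<Sum>m<N. (norm (slice_coeff f (Suc m) (r * unit_circle_param t)))\<^sup>2)"
    using r by (intro integral_sum[symmetric] integrable_continuous_interval continuous_intros
                      continuous_on_compose2[OF slice]) (auto simp: norm_mult)
  also have "\<dots> = 128 / c * integral {0..1} (\<lambda>t. G (2 * pi * t))" if "c > 0"
    using that by (simp add: G_def unit_circle_param_eq_cis)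
  finally have "c / 128 * (\<Sum>m<N. \<Sum>n<N. (norm (bidisc_coeff f (Suc m) n))\<^sup>2 * r ^ (2*n))
      \<le> integral {0..1} (\<lambda>t. G (2 * pi * t))" if "c > 0"
    using that by (simp add: field_simps)
  moreover have "G \<theta> \<ge> 0" for \<theta>
    using c by (simp add: G_def sum_nonneg)
  ultimately have "ennreal (c / 128 * (\<Sum>m<N. \<Sum>n<N. (norm (bidisc_coeff f (Suc m) n))\<^sup>2 * r ^ (2*n)))
      \<le> circ_int (\<lambda>\<theta>. ennreal (G \<theta>))"
    using c by (cases "c = 0") (auto simp: circ_int_eq_integral[OF G] ennreal_leI)
  also have "\<dots> \<le> circ_int (\<lambda>\<theta>. area_int (\<lambda>z1. (norm (pd1 f (z1, r * cis \<theta>)))\<^sup>2 * P z1))"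
    unfolding G_def
    by (intro circ_int_mono area_int_slice_deriv_ge[OF f c P]) (use r in \<open>auto simp: norm_mult\<close>)
  finally show ?thesis .
qed

lemma one_minus_power_ge_half:
  assumes "n < N"
  shows "1/2 \<le> (1 - 1 / (4 * real N + 4)) ^ (2*n)"
proof -
  define r where "r = 1 - 1 / (4 * real N + 4)"
  have r: "0 \<le> r" "r \<le> 1" by (auto simp: r_def field_simps)
  have "1/2 \<le> 1 + real (2*N) * (r - 1)"
    by (simp add: r_def field_simps)
  also have "\<dots> \<le> r ^ (2*N)"
    using Bernoulli_inequality[of "r - 1" "2*N"] r by simp
  also have "\<dots> \<le> r ^ (2*n)"
    using r assms by (intro power_decreasing) auto
  finally show ?thesis by (simp add: r_def)
qed

text \<open>Taking \<open>r = 1 - 1/(4N + 4)\<close> makes the factors \<open>r\<^sup>2\<^sup>n\<close>, \<open>n < N\<close>, at least \<open>1/2\<close>.\<close>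

lemma sum_sq_bidisc_coeff_Suc_bounded:
  assumes f: "holo_bidisc f" and \<mu>: "circle_measure \<mu>" "\<not> zero_measure \<mu>"
    and fin: "dirichlet_integral_fst \<mu> f < \<infinity>"
  obtains B where "\<And>N. (\<Sum>m<N. \<Sum>n<N. (norm (bidisc_coeff f (Suc m) n))\<^sup>2) \<le> B"
proof -
  define c where "c = measure \<mu> (space \<mu>) / 2"
  have c: "c > 0"
    using circle_measure_mass_pos[OF \<mu>] by (simp add: c_def)
  have P: "c * (1 - norm z) \<le> poisson \<mu> z" if "z \<in> unit_disc" for z
    unfolding c_def by (rule poisson_ge[OF \<mu>(1) that])
  obtain B where B: "dirichlet_integral_fst \<mu> f = ennreal B" "B \<ge> 0"
    using fin by (cases "dirichlet_integral_fst \<mu> f") auto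
  have "(\<Sum>m<N. \<Sum>n<N. (norm (bidisc_coeff f (Suc m) n))\<^sup>2) \<le> 256 / c * B" for N
  proof -
    define r where "r = 1 - 1 / (4 * real N + 4)"
    have r: "0 < r" "r < 1" by (auto simp: r_def field_simps)
    have "(\<Sum>m<N. \<Sum>n<N. (norm (bidisc_coeff f (Suc m) n))\<^sup>2)
        \<le> (\<Sum>m<N. \<Sum>n<N. 2 * ((norm (bidisc_coeff f (Suc m) n))\<^sup>2 * r ^ (2*n)))"
    proof (intro sum_mono)
      fix m n assume "n \<in> {..<N}"
      then have "1 \<le> 2 * r ^ (2*n)"
        using one_minus_power_ge_half[of n N] by (simp add: r_def)
      from mult_left_mono[OF this, of "(norm (bidisc_coeff f (Suc m) n))\<^sup>2"]
      show "(norm (bidisc_coeff f (Suc m) n))\<^sup>2 \<le> 2 * ((norm (bidisc_coeff f (Suc m) n))\<^sup>2 * r ^ (2*n))"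
        by simp
    qed
    also have "\<dots> = 256 / c * (c / 128 * (\<Sum>m<N. \<Sum>n<N. (norm (bidisc_coeff f (Suc m) n))\<^sup>2 * r ^ (2*n)))"
      using c by (simp add: sum_distrib_left ac_simps)
    also have "\<dots> \<le> 256 / c * B"
    proof -
      have "ennreal (c / 128 * (\<Sum>m<N. \<Sum>n<N. (norm (bidisc_coeff f (Suc m) n))\<^sup>2 * r ^ (2*n)))
          \<le> circ_int (\<lambda>\<theta>. area_int (\<lambda>z1. (norm (pd1 f (z1, r * cis \<theta>)))\<^sup>2 * poisson \<mu> z1))"
        using c P r by (intro sum_sq_bidisc_coeff_le_circ_int[OF f]) auto
      also have "\<dots> \<le> dirichlet_integral_fst \<mu> f"
        unfolding dirichlet_integral_fst_def by (rule SUP_upper) (use r in simp)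
      finally have "ennreal (c / 128 * (\<Sum>m<N. \<Sum>n<N. (norm (bidisc_coeff f (Suc m) n))\<^sup>2 * r ^ (2*n)))
          \<le> ennreal B"
        by (simp only: B)
      then show ?thesis
        using c B by (intro mult_left_mono) (simp_all add: ennreal_le_iff)
    qed
    finally show ?thesis .
  qed
  then show ?thesis by (rule that)
qed

lemma nonneg_summable_on_if_shifted_sums_bounded:
  fixes F :: "nat \<times> nat \<Rightarrow> real"
  assumes F: "\<And>x. F x \<ge> 0"
    and B1: "\<And>N. (\<Sum>m<N. \<Sum>n<N. F (Suc m, n)) \<le> B1"
    and B2: "\<And>N. (\<Sum>m<N. \<Sum>n<N. F (m, Suc n)) \<le> B2"
  shows "F summable_on UNIV"
proof -
  have square: "(\<Sum>m<N. \<Sum>n<N. F (m, n)) \<le> F (0, 0) + B1 + B2" for N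
  proof (cases N)
    case (Suc M)
    have "(\<Sum>n<M. F (0, Suc n)) \<le> (\<Sum>m<M. \<Sum>n<M. F (m, Suc n))"
    proof (cases M)
      case (Suc M')
      then show ?thesis
        using member_le_sum[of 0 "{..<M}" "\<lambda>m. \<Sum>n<M. F (m, Suc n)"] by (simp add: F sum_nonneg)
    qed simp
    also have "\<dots> \<le> B2" by (rule B2)
    finally have row0: "(\<Sum>n<Suc M. F (0, n)) \<le> F (0, 0) + B2"
      by (simp only: sum.lessThan_Suc_shift)
    have "(\<Sum>m<M. \<Sum>n<Suc M. F (Suc m, n)) \<le> (\<Sum>m<Suc M. \<Sum>n<Suc M. F (Suc m, n))"
      by (simp add: F sum_nonneg)
    also have "\<dots> \<le> B1" by (rule B1)
    finally have "(\<Sum>m<M. \<Sum>n<Suc M. F (Suc m, n)) \<le> B1" .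
    with row0 show ?thesis
      unfolding Suc sum.lessThan_Suc_shift[of "\<lambda>m. \<Sum>n<Suc M. F (m, n)"] by simp
  qed (use B1[of 0] B2[of 0] F in simp)
  show ?thesis
  proof (rule nonneg_bounded_partial_sums_imp_summable_on[OF F])
    show "\<forall>\<^sub>F X in finite_subsets_at_top UNIV. sum F X \<le> F (0, 0) + B1 + B2"
    proof (rule eventually_finite_subsets_at_top_weakI)
      fix X :: "(nat \<times> nat) set" assume "finite X"
      then obtain N where N: "fst ` X \<union> snd ` X \<subseteq> {..<N}"
        using finite_nat_bounded[of "fst ` X \<union> snd ` X"] by blast
      have "X \<subseteq> {..<N} \<times> {..<N}"
      proof
        fix x assume "x \<in> X"
        then show "x \<in> {..<N} \<times> {..<N}"
          using N by (auto simp: mem_Times_iff)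
      qed
      then have "sum F X \<le> sum F ({..<N} \<times> {..<N})"
        by (intro sum_mono2) (auto simp: F)
      also have "\<dots> \<le> F (0, 0) + B1 + B2"
        using square by (simp add: sum.cartesian_product')
      finally show "sum F X \<le> F (0, 0) + B1 + B2" .
    qed
  qed
qed

lemma H2_bidiscI:
  assumes f: "holo_bidisc f"
    and B1: "\<And>N. (\<Sum>m<N. \<Sum>n<N. (norm (bidisc_coeff f (Suc m) n))\<^sup>2) \<le> B1"
    and B2: "\<And>N. (\<Sum>m<N. \<Sum>n<N. (norm (bidisc_coeff (\<lambda>(z1, z2). f (z2, z1)) (Suc m) n))\<^sup>2) \<le> B2"
  shows "f \<in> H2_bidisc"
proof -
  have "(\<Sum>m<N. \<Sum>n<N. (norm (bidisc_coeff f m (Suc n)))\<^sup>2) \<le> B2" for N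
  proof -
    have "(\<Sum>m<N. \<Sum>n<N. (norm (bidisc_coeff f m (Suc n)))\<^sup>2)
        = (\<Sum>n<N. \<Sum>m<N. (norm (bidisc_coeff (\<lambda>(z1, z2). f (z2, z1)) (Suc n) m))\<^sup>2)"
      by (subst sum.swap) (simp add: bidisc_coeff_swap[OF f])
    then show ?thesis using B2[of N] by simp
  qed
  then have "(\<lambda>(m, n). (norm (bidisc_coeff f m n))\<^sup>2) summable_on UNIV"
    by (intro nonneg_summable_on_if_shifted_sums_bounded) (use B1 in auto)
  then show ?thesis
    unfolding H2_bidisc_def
    by (intro CollectI conjI f exI[of _ "\<lambda>(m, n). bidisc_coeff f m n"])
       (simp_all add: has_sum_bidisc_coeff[OF f])
qed

theorem lemma1p3:
  fixes \<mu>1 \<mu>2 :: "complex measure"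
  assumes "circle_measure \<mu>1" and "circle_measure \<mu>2"
  shows "dirichlet_space \<mu>1 \<mu>2 \<subseteq> H2_bidisc"
proof
  fix f assume f: "f \<in> dirichlet_space \<mu>1 \<mu>2"
  show "f \<in> H2_bidisc"
  proof (cases "zero_measure \<mu>1 \<or> zero_measure \<mu>2")
    case True
    then show ?thesis using f by (simp add: dirichlet_space_def)
  next
    case False
    then have nonzero: "\<not> zero_measure \<mu>1" "\<not> zero_measure \<mu>2" by auto
    define f' where "f' = (\<lambda>(z1, z2). f (z2, z1))"
    have hf: "holo_bidisc f" and hf': "holo_bidisc f'"
      using False f holo_bidisc_swap by (auto simp: dirichlet_space_def f'_def)
    have "dirichlet_integral_fst \<mu>1 f + dirichlet_integral_fst \<mu>2 f' < \<infinity>"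
      using False f by (simp add: dirichlet_space_def dirichlet_integral_eq_fst_swap f'_def)
    then have fin: "dirichlet_integral_fst \<mu>1 f < \<infinity>" "dirichlet_integral_fst \<mu>2 f' < \<infinity>"
      by (simp_all add: ennreal_add_eq_top top.not_eq_extremum)
    obtain B1 where "\<And>N. (\<Sum>m<N. \<Sum>n<N. (norm (bidisc_coeff f (Suc m) n))\<^sup>2) \<le> B1"
      using sum_sq_bidisc_coeff_Suc_bounded[OF hf assms(1) nonzero(1) fin(1)] by blast
    moreover obtain B2 where "\<And>N. (\<Sum>m<N. \<Sum>n<N. (norm (bidisc_coeff f' (Suc m) n))\<^sup>2) \<le> B2"
      using sum_sq_bidisc_coeff_Suc_bounded[OF hf' assms(2) nonzero(2) fin(2)] by blast
    ultimately show ?thesis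
      unfolding f'_def by (rule H2_bidiscI[OF hf])
  qed
qed

end
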